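(* Let $F\in SL(d,\mathbb{Z})$ be partially hyperbolic with invariant splitting $\mathbb{R}^d=S\oplus C\oplus U$, $\dim C=c$, and Katznelson irreducible ($C\cap\mathbb{Z}^d=\{0\}$). For $v\in\mathbb{R}^d$ let $v^c\in C$ be its projection to $C$ along $S\oplus U$, and order the standard basis $e_1,\dots,e_d$ of $\mathbb{R}^d$ so that $e_1^c,\dots,e_c^c$ is a basis of $C$. Identify $C$ with $\mathbb{R}^c$ via $e_i^c\mapsto e_i$ ($i\le c$), and let $P:\mathbb{R}^d\to\mathbb{R}^c$ be the resulting linear projection (so $Pe_i=e_i$ for $i=1,\dots,c$). Then there is $K>0$ such that for every $q\in\mathbb{Z}^c\setminus\{0\}$ there exists $i\in\{1,\dots,d\}$ with $$|Pe_i\cdot q-p|>\frac{K}{|q|^{c}}\quad\text{for all }p\in\mathbb{Z}.$$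
   Context: Partial hyperbolicity of $F$: for some metric, $\|F|_S\|<1$, $m(F|_U)>1$, $\|F|_S\|<m(F|_C)$, $m(F|_U)>\|F|_C\|$ ($m$ = conorm). Here $\cdot$ is the standard inner product on $\mathbb{R}^c$ and $|q|$ the Euclidean norm. *)

theory Defs
  imports "HOL-Analysis.Analysis"
begin

definition SL_int :: "real^'d^'d \<Rightarrow> bool" where
  "SL_int F \<longleftrightarrow> (\<forall>i j. F $ i $ j \<in> \<int>) \<and> det F = 1"

definition int_lattice :: "(real^'d) set" where
  "int_lattice = {x. \<forall>i. x $ i \<in> \<int>}"

definition direct_splitting :: "(real^'d) set \<Rightarrow> (real^'d) set \<Rightarrow> (real^'d) set \<Rightarrow> bool" where
  "direct_splitting S C U \<longleftrightarrow> subspace S \<and> subspace C \<and> subspace U \<and>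
     (\<forall>v. \<exists>!(s, c, u). s \<in> S \<and> c \<in> C \<and> u \<in> U \<and> v = s + c + u)"

definition cproj :: "(real^'d) set \<Rightarrow> (real^'d) set \<Rightarrow> (real^'d) set \<Rightarrow> real^'d \<Rightarrow> real^'d" where
  "cproj S C U v = fst (snd (THE (s, c, u). s \<in> S \<and> c \<in> C \<and> u \<in> U \<and> v = s + c + u))"

definition restr_norm :: "(real^'d \<Rightarrow> real) \<Rightarrow> real^'d^'d \<Rightarrow> (real^'d) set \<Rightarrow> real" where
  "restr_norm N F V = Sup {N (F *v x) / N x | x. x \<in> V \<and> x \<noteq> 0}"

definition restr_conorm :: "(real^'d \<Rightarrow> real) \<Rightarrow> real^'d^'d \<Rightarrow> (real^'d) set \<Rightarrow> real" where
  "restr_conorm N F V = Inf {N (F *v x) / N x | x. x \<in> V \<and> x \<noteq> 0}"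

text \<open>Partial hyperbolicity with respect to the invariant splitting S (+) C (+) U:
  for some inner product norm (every such norm has the form x \<mapsto> |A x| with A invertible),
  the four inequalities hold.\<close>
definition partially_hyperbolic ::
  "real^'d^'d \<Rightarrow> (real^'d) set \<Rightarrow> (real^'d) set \<Rightarrow> (real^'d) set \<Rightarrow> bool" where
  "partially_hyperbolic F S C U \<longleftrightarrow>
     direct_splitting S C U \<and>
     (\<lambda>x. F *v x) ` S = S \<and> (\<lambda>x. F *v x) ` C = C \<and> (\<lambda>x. F *v x) ` U = U \<and>
     S \<noteq> {0} \<and> C \<noteq> {0} \<and> U \<noteq> {0} \<and>
     (\<exists>A :: real^'d^'d. invertible A \<and>
        (let N = (\<lambda>x. norm (A *v x)) in
          restr_norm N F S < 1 \<and> restr_conorm N F U > 1 \<and>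
          restr_norm N F S < restr_conorm N F C \<and> restr_conorm N F U > restr_norm N F C))"

end

theory Submission
  imports Defs
begin

text \<open>
  Let \<open>W\<close> be the annihilator of \<open>S \<oplus> U\<close> and \<open>Q\<close> the projection onto \<open>W\<close> with kernel the annihilator
  of \<open>C\<close>. The vector \<open>(P e\<^sub>i \<bullet> q)\<^sub>i\<close> lies in \<open>W\<close>, and \<open>dim W \<le> c\<close>. The theorem follows from the
  estimate \<open>|n - Q n| |n|\<^bsup>dim W\<^esup> \<ge> \<kappa>\<close> for all nonzero integer vectors \<open>n\<close>, applied to the integer
  vector nearest to \<open>(P e\<^sub>i \<bullet> q)\<^sub>i\<close>.

  To prove the estimate, let \<open>p\<close> be the minimal polynomial of \<open>n\<close> under the transpose \<open>F\<^sup>T\<close>, of degree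
  \<open>m \<le> d\<close>; its coefficients may be taken integral. The integer vectors \<open>n, F\<^sup>T n, \<dots>, (F\<^sup>T)\<^bsup>m-1\<^esup> n\<close>
  are independent, but their projections by \<open>Q\<close> are not: otherwise the orbit of \<open>n\<close> would be a linear
  image of an orbit in \<open>W\<close>, on which \<open>F\<^sup>T\<close> has the growth rates of \<open>F\<close> on \<open>C\<close>, and comparing with the
  rates on \<open>S\<close> and \<open>U\<close> would put \<open>n\<close> into \<open>W\<close>. The same comparison shows that \<open>W\<close> contains no
  nonzero integer vector, as \<open>p(F)\<close> would then have an integer kernel vector in \<open>C\<close>. Completing the
  orbit by standard basis vectors gives an integer matrix with \<open>|det| \<ge> 1\<close>; expanding the
  determinant along the splitting of each orbit vector into its \<open>W\<close>-part, of size \<open>O(|n|)\<close>, and its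
  remainder, of size \<open>O(|n - Q n|)\<close>, every non-vanishing term contains a remainder and at most
  \<open>dim W\<close> of the \<open>W\<close>-parts. Hence \<open>1 \<le> O(|n - Q n| |n|\<^bsup>dim W\<^esup>)\<close>.
\<close>


section \<open>Linearly independent families\<close>

text \<open>Unlike \<open>independent (x ` I)\<close>, this notion counts a repeated vector as a dependence.\<close>
definition independent_family :: "('i \<Rightarrow> 'a::real_vector) \<Rightarrow> 'i set \<Rightarrow> bool" where
  "independent_family x I \<longleftrightarrow> (\<forall>c. (\<Sum>i\<in>I. c i *\<^sub>R x i) = 0 \<longrightarrow> (\<forall>i\<in>I. c i = 0))"

lemma independent_family_iff:
  assumes "finite I"
  shows "independent_family x I \<longleftrightarrow> inj_on x I \<and> independent (x ` I)"
proof
  assume ind: "independent_family x I"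
  show "inj_on x I \<and> independent (x ` I)"
  proof
    show inj: "inj_on x I"
    proof (rule inj_onI, rule ccontr)
      fix i j assume ij: "i \<in> I" "j \<in> I" "x i = x j" "i \<noteq> j"
      define c where "c k = (if k = i then 1 else if k = j then -1 else 0::real)" for k
      have "(\<Sum>k\<in>I. c k *\<^sub>R x k) = (\<Sum>k\<in>{i, j}. c k *\<^sub>R x k)"
        using ij assms by (intro sum.mono_neutral_right) (auto simp: c_def)
      also have "\<dots> = 0" using ij by (simp add: c_def)
      finally have "c i = 0" using ind ij unfolding independent_family_def by blast
      then show False by (simp add: c_def)
    qed
    show "independent (x ` I)"
    proof
      assume "dependent (x ` I)"
      then obtain u i where "i \<in> I" "u (x i) \<noteq> 0" and sum: "(\<Sum>v\<in>x ` I. u v *\<^sub>R v) = 0"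
        using dependent_finite[OF finite_imageI[OF assms]] by blast
      have "(\<Sum>i\<in>I. u (x i) *\<^sub>R x i) = 0" using sum by (simp add: sum.reindex[OF inj])
      then have "\<forall>i\<in>I. u (x i) = 0"
        using ind[unfolded independent_family_def, rule_format, of "\<lambda>i. u (x i)"] by blast
      then show False using \<open>i \<in> I\<close> \<open>u (x i) \<noteq> 0\<close> by blast
    qed
  qed
next
  assume "inj_on x I \<and> independent (x ` I)"
  then have inj: "inj_on x I" and ind: "independent (x ` I)" by auto
  show "independent_family x I"
    unfolding independent_family_def
  proof (intro allI impI)
    fix c assume sum: "(\<Sum>i\<in>I. c i *\<^sub>R x i) = 0"
    have "(\<Sum>v\<in>x ` I. c (inv_into I x v) *\<^sub>R v) = 0"
      using sum inj by (simp add: sum.reindex)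
    then have "\<forall>v\<in>x ` I. c (inv_into I x v) = 0"
      using ind assms dependent_finite[of "x ` I"] by auto
    then show "\<forall>i\<in>I. c i = 0" using inj by auto
  qed
qed

lemma independent_family_cong:
  "(\<And>i. i \<in> I \<Longrightarrow> x i = y i) \<Longrightarrow> independent_family x I \<longleftrightarrow> independent_family y I"
  unfolding independent_family_def by (metis (no_types, lifting) sum.cong)

lemma independent_family_subset:
  assumes "independent_family x I" "J \<subseteq> I" "finite I"
  shows "independent_family x J"
  unfolding independent_family_def
proof (intro allI impI)
  fix c assume sum: "(\<Sum>i\<in>J. c i *\<^sub>R x i) = 0"
  define c' where "c' i = (if i \<in> J then c i else 0)" for i
  have "(\<Sum>i\<in>I. c' i *\<^sub>R x i) = (\<Sum>i\<in>J. c i *\<^sub>R x i)"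
    using assms(2,3) by (intro sum.mono_neutral_cong_right) (auto simp: c'_def)
  then have "\<forall>i\<in>I. c' i = 0" using sum assms(1) unfolding independent_family_def by metis
  then show "\<forall>i\<in>J. c i = 0" using assms(2) unfolding c'_def by (metis subsetD)
qed

lemma independent_family_reindex:
  assumes "independent_family x I" "bij_betw h J I"
  shows "independent_family (x \<circ> h) J"
  unfolding independent_family_def
proof (intro allI impI)
  fix c assume sum: "(\<Sum>j\<in>J. c j *\<^sub>R (x \<circ> h) j) = 0"
  have inj: "inj_on h J" using assms(2) by (simp add: bij_betw_def)
  have "(\<Sum>i\<in>I. c (inv_into J h i) *\<^sub>R x i) = (\<Sum>j\<in>J. c (inv_into J h (h j)) *\<^sub>R x (h j))"
    using sum.reindex_bij_betw[OF assms(2), of "\<lambda>i. c (inv_into J h i) *\<^sub>R x i"] by simp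
  also have "\<dots> = 0" using sum inj by (simp add: inv_into_f_f)
  finally have "\<forall>i\<in>I. c (inv_into J h i) = 0"
    using assms(1)[unfolded independent_family_def, rule_format, of "\<lambda>i. c (inv_into J h i)"] by blast
  then show "\<forall>j\<in>J. c j = 0" using assms(2) inj by (metis bij_betw_apply inv_into_f_f)
qed

lemma independent_family_card_le_dim:
  fixes x :: "'i \<Rightarrow> 'a::euclidean_space"
  assumes "independent_family x I" "finite I" "\<And>i. i \<in> I \<Longrightarrow> x i \<in> W"
  shows "card I \<le> dim W"
proof -
  have "card (x ` I) \<le> dim W"
    using assms by (intro independent_card_le_dim) (auto simp: independent_family_iff)
  then show ?thesis using assms(1,2) by (simp add: independent_family_iff card_image)
qed

lemma independent_family_linear_extension:
  fixes x :: "'i \<Rightarrow> 'a::euclidean_space" and y :: "'i \<Rightarrow> 'b::real_vector"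
  assumes "independent_family x I" "finite I"
  obtains T where "linear T" "\<And>i. i \<in> I \<Longrightarrow> T (x i) = y i"
proof -
  have inj: "inj_on x I" and ind: "independent (x ` I)"
    using assms by (auto simp: independent_family_iff)
  obtain T :: "'a \<Rightarrow> 'b" where T: "linear T" "\<forall>v\<in>x ` I. T v = y (inv_into I x v)"
    using real_vector.linear_independent_extend[OF ind, where f="\<lambda>v. y (inv_into I x v)"] by blast
  show ?thesis
  proof (rule that)
    show "linear T" by (fact T(1))
    show "T (x i) = y i" if "i \<in> I" for i using T(2) inj that by simp
  qed
qed

lemma independent_family_extend_by_Basis:
  fixes x :: "'i \<Rightarrow> real^'n"
  assumes "independent_family x I" "finite I"
  obtains \<beta> :: "'n \<Rightarrow> real^'n" and h where "independent_family \<beta> UNIV" "inj_on h I"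
    "\<And>k. k \<in> I \<Longrightarrow> \<beta> (h k) = x k" "\<And>i. i \<notin> h ` I \<Longrightarrow> \<beta> i \<in> Basis"
proof -
  have ind: "independent (x ` I)" and inj: "inj_on x I"
    using assms by (auto simp: independent_family_iff)
  obtain B where B: "x ` I \<subseteq> B" "B \<subseteq> x ` I \<union> Basis" "independent B" "x ` I \<union> Basis \<subseteq> span B"
    using maximal_independent_subset_extend[of "x ` I" "x ` I \<union> Basis"] ind by blast
  have "span Basis \<subseteq> span B" using B(4) span_minimal[of Basis "span B"] subspace_span by blast
  then have "span B = UNIV" by auto
  then have "card B = CARD('n)"
    using dim_span_eq_card_independent[OF B(3)] by simp
  moreover have "finite B" using independent_bound[OF B(3)] by blast
  ultimately obtain \<beta> where \<beta>: "bij_betw \<beta> (UNIV :: 'n set) B"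
    using finite_same_card_bij[of "UNIV :: 'n set" B] by auto
  define h where "h k = inv \<beta> (x k)" for k
  have \<beta>h: "\<beta> (h k) = x k" if "k \<in> I" for k
    using \<beta> B(1) that unfolding h_def by (metis bij_betw_inv_into_right image_subset_iff)
  show ?thesis
  proof
    show "inj_on h I"
    proof (rule inj_onI)
      fix k l assume "k \<in> I" "l \<in> I" "h k = h l"
      then have "x k = x l" using \<beta>h by metis
      then show "k = l" using inj \<open>k \<in> I\<close> \<open>l \<in> I\<close> by (meson inj_onD)
    qed
    show "\<beta> (h k) = x k" if "k \<in> I" for k using \<beta>h that .
    show "\<beta> i \<in> Basis" if "i \<notin> h ` I" for i
    proof -
      have "\<beta> i \<notin> x ` I"
      proof
        assume "\<beta> i \<in> x ` I"
        then obtain k where "k \<in> I" "x k = \<beta> i" by auto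
        then have "h k = i" unfolding h_def using \<beta> by (simp add: bij_betw_def)
        then show False using that \<open>k \<in> I\<close> by blast
      qed
      moreover have "\<beta> i \<in> B" using \<beta> by (auto simp: bij_betw_def)
      ultimately show ?thesis using B(2) by blast
    qed
    show "independent_family \<beta> UNIV"
      using \<beta> B(3) by (simp add: independent_family_iff bij_betw_def)
  qed
qed

lemma det_nonzero_iff_independent_rows:
  fixes A :: "real^'n^'n"
  shows "det A \<noteq> 0 \<longleftrightarrow> independent_family (\<lambda>i. A $ i) UNIV"
proof -
  have "det A \<noteq> 0 \<longleftrightarrow> (\<exists>B. A ** B = mat 1)"
    using invertible_det_nz[of A] invertible_right_inverse[of A] by blast
  also have "\<dots> \<longleftrightarrow> (\<forall>c. (\<Sum>i\<in>UNIV. c i *s row i A) = 0 \<longrightarrow> (\<forall>i. c i = 0))"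
    by (rule matrix_right_invertible_independent_rows)
  finally show ?thesis
    unfolding independent_family_def row_def scalar_mult_eq_scaleR by simp
qed

section \<open>Integer vectors\<close>

lemma int_lattice_norm_ge_1:
  assumes "n \<in> int_lattice" "n \<noteq> 0"
  shows "1 \<le> norm n"
proof -
  obtain i where "n $ i \<noteq> 0" using assms(2) by (metis vec_eq_iff zero_index)
  moreover have "n $ i \<in> \<int>" using assms(1) by (simp add: int_lattice_def)
  ultimately have "1 \<le> \<bar>n $ i\<bar>" by (rule Ints_nonzero_abs_ge1[rotated])
  then show ?thesis using component_le_norm_cart[of n i] by linarith
qed

lemma int_lattice_nonzero_if_near:
  fixes q :: "real^'c" and n :: "real^'d"
  assumes "q \<in> int_lattice" "q \<noteq> 0" "\<And>j. \<bar>q $ j - n $ \<iota> j\<bar> < 1"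
  shows "n \<noteq> 0"
proof
  assume "n = 0"
  obtain j where "q $ j \<noteq> 0" using assms(2) by (metis vec_eq_iff zero_index)
  moreover have "q $ j \<in> \<int>" using assms(1) by (simp add: int_lattice_def)
  ultimately have "1 \<le> \<bar>q $ j\<bar>" by (rule Ints_nonzero_abs_ge1[rotated])
  then show False using assms(3)[of j] \<open>n = 0\<close> by simp
qed

lemma int_lattice_rounding:
  fixes x :: "real^'n"
  assumes "\<forall>i. \<exists>p\<in>\<int>. \<bar>x $ i - p\<bar> \<le> \<epsilon>"
  obtains n where "n \<in> int_lattice" "\<And>i. \<bar>x $ i - n $ i\<bar> \<le> \<epsilon>" "norm (n - x) \<le> real CARD('n) * \<epsilon>"
proof -
  obtain p where p: "\<And>i. p i \<in> \<int>" "\<And>i. \<bar>x $ i - p i\<bar> \<le> \<epsilon>" using assms by metis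
  have "norm ((\<chi> i. p i) - x) \<le> (\<Sum>i\<in>UNIV. \<bar>((\<chi> i. p i) - x) $ i\<bar>)" by (rule norm_le_l1_cart)
  also have "\<dots> \<le> (\<Sum>i\<in>(UNIV::'n set). \<epsilon>)" using p(2) by (intro sum_mono) (simp add: abs_minus_commute)
  finally show ?thesis using that[of "\<chi> i. p i"] p by (simp add: int_lattice_def)
qed

lemma axis_in_int_lattice: "axis i 1 \<in> int_lattice"
  by (simp add: int_lattice_def axis_def)

lemma Basis_in_int_lattice: "x \<in> (Basis :: (real^'n) set) \<Longrightarrow> x \<in> int_lattice"
  unfolding Basis_vec_def by (auto simp: axis_in_int_lattice)

lemma int_lattice_sum:
  assumes "finite I" "\<And>i. i \<in> I \<Longrightarrow> v i \<in> int_lattice" "\<And>i. i \<in> I \<Longrightarrow> c i \<in> \<int>"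
  shows "(\<Sum>i\<in>I. c i *\<^sub>R v i) \<in> int_lattice"
  using assms unfolding int_lattice_def by (auto simp: sum_component intro!: Ints_sum Ints_mult)

lemma Rats_common_multiplier:
  fixes r :: "'i \<Rightarrow> real"
  assumes "finite I" "\<And>i. i \<in> I \<Longrightarrow> r i \<in> \<rat>"
  obtains D :: int where "D > 0" "\<And>i. i \<in> I \<Longrightarrow> of_int D * r i \<in> \<int>"
proof -
  have "\<exists>D::int. D > 0 \<and> (\<forall>i\<in>I. of_int D * r i \<in> \<int>)"
    using assms
  proof (induction I rule: finite_induct)
    case empty
    show ?case by (intro exI[of _ 1]) auto
  next
    case (insert j I)
    then obtain D :: int where D: "D > 0" "\<forall>i\<in>I. of_int D * r i \<in> \<int>" by auto
    have "r j \<in> \<rat>" using insert.prems by simp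
    then obtain a b :: int where ab: "b > 0" "r j = of_int a / of_int b"
      by (metis Rats_cases')
    have "of_int (D * b) * r i \<in> \<int>" if "i \<in> I" for i
    proof -
      have "of_int (D * b) * r i = of_int b * (of_int D * r i)" by simp
      then show ?thesis using D(2) that by (metis Ints_mult Ints_of_int)
    qed
    moreover have "of_int (D * b) * r j \<in> \<int>"
      using ab by (simp add: Ints_of_int)
    ultimately show ?case
      using D(1) ab(1) by (intro exI[of _ "D * b"]) auto
  qed
  then show ?thesis using that by blast
qed

text \<open>A \<open>\<rat>\<close>-linear functional \<open>l\<close> on \<open>\<real>\<close> with \<open>l (c i\<^sub>0) = 1\<close> turns a real relation among integer
  vectors into a rational one with non-zero \<open>i\<^sub>0\<close>-th coefficient.\<close>
lemma integer_relation_from_real_relation: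
  fixes v :: "'i \<Rightarrow> real^'d"
  assumes fin: "finite I" and vint: "\<And>i. i \<in> I \<Longrightarrow> v i \<in> int_lattice"
    and rel: "(\<Sum>i\<in>I. c i *\<^sub>R v i) = 0" and i0: "i0 \<in> I" "c i0 \<noteq> 0"
  obtains c' where "\<And>i. i \<in> I \<Longrightarrow> c' i \<in> \<int>" "(\<Sum>i\<in>I. c' i *\<^sub>R v i) = 0" "c' i0 \<noteq> 0"
proof -
  interpret Qv: vector_space "\<lambda>(r::rat) (x::real). of_rat r * x"
    by unfold_locales (auto simp: algebra_simps of_rat_add of_rat_mult)
  have ind: "Qv.independent {c i0}"
    using i0 by (simp add: Qv.independent_insert Qv.span_empty)
  define B where "B = Qv.extend_basis {c i0}"
  have B: "Qv.independent B" "Qv.span B = UNIV" "c i0 \<in> B"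
    using Qv.independent_extend_basis[OF ind] Qv.span_extend_basis[OF ind]
      Qv.extend_basis_superset[OF ind] unfolding B_def by auto
  define l where "l x = Qv.representation B x (c i0)" for x
  have l_sum: "l (\<Sum>i\<in>I. y i) = (\<Sum>i\<in>I. l (y i))" for y :: "'i \<Rightarrow> real"
    unfolding l_def using Qv.representation_sum[OF B(1), of I y] B(2) by auto
  have l_rat: "l (of_rat q * x) = q * l x" for q x
    unfolding l_def using Qv.representation_scale[OF B(1)] B(2) by auto
  have l_int: "l (of_int k * x) = of_int k * l x" for k x
    using l_rat[of "of_int k" x] by simp
  have l_c: "l (c i0) = 1"
    unfolding l_def using Qv.representation_basis[OF B(1,3)] by simp
  have l_0: "l 0 = 0"
    using l_int[of 0 0] by simp
  define r where "r i = (of_rat (l (c i)) :: real)" for i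
  have rel_r: "(\<Sum>i\<in>I. r i *\<^sub>R v i) = 0"
  proof (rule vec_eq_iff[THEN iffD2], rule allI)
    fix j
    have "\<forall>i\<in>I. \<exists>k::int. v i $ j = of_int k"
      using vint unfolding int_lattice_def by (auto elim!: Ints_cases)
    then obtain k where k: "\<forall>i\<in>I. v i $ j = of_int (k i)" by metis
    have "(\<Sum>i\<in>I. c i * v i $ j) = 0"
      using arg_cong[OF rel, of "\<lambda>x. x $ j"] by (simp add: sum_component)
    then have "(\<Sum>i\<in>I. of_int (k i) * c i) = 0"
      using k by (simp add: mult.commute)
    then have "l (\<Sum>i\<in>I. of_int (k i) * c i) = 0" using l_0 by simp
    then have "(\<Sum>i\<in>I. of_int (k i) * l (c i)) = 0" by (simp add: l_sum l_int)
    then have "of_rat (\<Sum>i\<in>I. of_int (k i) * l (c i)) = (0::real)" by simp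
    then have "(\<Sum>i\<in>I. r i * of_int (k i)) = 0"
      unfolding r_def by (simp add: of_rat_sum of_rat_mult mult.commute)
    then show "(\<Sum>i\<in>I. r i *\<^sub>R v i) $ j = 0 $ j"
      using k by (simp add: sum_component)
  qed
  have r_rat: "r i \<in> \<rat>" for i unfolding r_def by simp
  obtain D :: int where D: "D > 0" "\<And>i. i \<in> I \<Longrightarrow> of_int D * r i \<in> \<int>"
    using Rats_common_multiplier[OF fin, of r] r_rat by blast
  show ?thesis
  proof (rule that[of "\<lambda>i. of_int D * r i"])
    show "of_int D * r i \<in> \<int>" if "i \<in> I" for i using D(2) that .
    have "(\<Sum>i\<in>I. (of_int D * r i) *\<^sub>R v i) = of_int D *\<^sub>R (\<Sum>i\<in>I. r i *\<^sub>R v i)"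
      by (simp add: scaleR_sum_right)
    then show "(\<Sum>i\<in>I. (of_int D * r i) *\<^sub>R v i) = 0" using rel_r by simp
    show "of_int D * r i0 \<noteq> 0" using D(1) l_c unfolding r_def by simp
  qed
qed

lemma integer_kernel_vector:
  fixes \<mu> :: "real^'d \<Rightarrow> real^'e"
  assumes "linear \<mu>" "\<And>i. \<mu> (axis i 1) \<in> int_lattice" "\<mu> x = 0" "x \<noteq> 0"
  obtains z where "z \<in> int_lattice" "z \<noteq> 0" "\<mu> z = 0"
proof -
  have expand: "\<mu> y = (\<Sum>i\<in>UNIV. y $ i *\<^sub>R \<mu> (axis i 1))" for y
  proof -
    have "\<mu> y = \<mu> (\<Sum>i\<in>UNIV. y $ i *\<^sub>R axis i 1)"
      using basis_expansion[of y] by (simp add: scalar_mult_eq_scaleR)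
    then show ?thesis using assms(1) by (simp add: linear_sum linear_scale)
  qed
  obtain i0 where i0: "x $ i0 \<noteq> 0" using assms(4) by (metis vec_eq_iff zero_index)
  have rel: "(\<Sum>i\<in>UNIV. x $ i *\<^sub>R \<mu> (axis i 1)) = 0" using expand[of x] assms(3) by simp
  obtain c where c: "\<And>i. i \<in> UNIV \<Longrightarrow> c i \<in> \<int>" "(\<Sum>i\<in>UNIV. c i *\<^sub>R \<mu> (axis i 1)) = 0" "c i0 \<noteq> 0"
    using integer_relation_from_real_relation[OF finite assms(2) rel UNIV_I i0] by blast
  show ?thesis
  proof (rule that[of "\<chi> i. c i"])
    show "(\<chi> i. c i) \<in> int_lattice" using c(1) by (simp add: int_lattice_def)
    show "(\<chi> i. c i) \<noteq> 0" using c(3) by (metis vec_lambda_beta zero_index)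
    show "\<mu> (\<chi> i. c i) = 0" using expand[of "\<chi> i. c i"] c(2) by simp
  qed
qed

section \<open>Determinant estimates\<close>

lemma det_in_Ints:
  fixes A :: "'a::comm_ring_1^'n^'n"
  assumes "\<And>i j. A $ i $ j \<in> \<int>"
  shows "det A \<in> \<int>"
  unfolding det_def using assms by (intro Ints_sum Ints_mult Ints_prod Ints_of_int) simp_all

lemma one_le_abs_det_int_lattice_rows:
  fixes \<beta> :: "'n \<Rightarrow> real^'n"
  assumes "\<And>i. \<beta> i \<in> int_lattice" "independent_family \<beta> UNIV"
  shows "1 \<le> \<bar>det (\<chi> i. \<beta> i)\<bar>"
proof (rule Ints_nonzero_abs_ge1)
  show "det (\<chi> i. \<beta> i) \<in> \<int>" using assms(1) by (intro det_in_Ints) (simp add: int_lattice_def)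
  show "det (\<chi> i. \<beta> i) \<noteq> 0" using assms(2) by (simp add: det_nonzero_iff_independent_rows)
qed

lemma abs_det_le_prod_row_norms:
  fixes A :: "real^'n^'n"
  shows "\<bar>det A\<bar> \<le> fact CARD('n) * (\<Prod>i\<in>UNIV. norm (A $ i))"
proof -
  have "\<bar>det A\<bar> \<le> (\<Sum>p | p permutes (UNIV::'n set). \<bar>of_int (sign p) * (\<Prod>i\<in>UNIV. A $ i $ p i)\<bar>)"
    unfolding det_def by (rule sum_abs)
  also have "\<dots> \<le> (\<Sum>p | p permutes (UNIV::'n set). \<Prod>i\<in>UNIV. norm (A $ i))"
  proof (rule sum_mono)
    fix p :: "'n \<Rightarrow> 'n"
    have "\<bar>of_int (sign p) * (\<Prod>i\<in>UNIV. A $ i $ p i)\<bar> = (\<Prod>i\<in>UNIV. \<bar>A $ i $ p i\<bar>)"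
      by (simp add: abs_mult abs_prod sign_def)
    also have "\<dots> \<le> (\<Prod>i\<in>UNIV. norm (A $ i))"
      by (intro prod_mono) (auto simp: component_le_norm_cart)
    finally show "\<bar>of_int (sign p) * (\<Prod>i\<in>UNIV. A $ i $ p i)\<bar> \<le> (\<Prod>i\<in>UNIV. norm (A $ i))" .
  qed
  also have "\<dots> = fact CARD('n) * (\<Prod>i\<in>UNIV. norm (A $ i))"
    using card_permutations[of "UNIV::'n set" "CARD('n)"] by simp
  finally show ?thesis .
qed

lemma det_add_rows_partial:
  fixes a e c :: "'n::finite \<Rightarrow> 'a::comm_ring_1^'n"
  assumes "finite K"
  shows "det (\<chi> i. if i \<in> K then a i + e i else c i) =
    (\<Sum>T\<in>Pow K. det (\<chi> i. if i \<in> T then a i else if i \<in> K then e i else c i))"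
  using assms
proof (induction K arbitrary: c rule: finite_induct)
  case empty
  then show ?case by simp
next
  case (insert k K c)
  define E where "E T = det (\<chi> i. if i \<in> T then a i else if i \<in> insert k K then e i else c i)"
    for T
  have a_part: "det (\<chi> i. if i \<in> T then a i else if i \<in> K then e i else (c(k := a k)) i) = E (insert k T)"
    if "T \<in> Pow K" for T
    unfolding E_def using that insert.hyps(2) by (intro arg_cong[where f=det] Cart_lambda_cong) auto
  have e_part: "det (\<chi> i. if i \<in> T then a i else if i \<in> K then e i else (c(k := e k)) i) = E T"
    if "T \<in> Pow K" for T
    unfolding E_def using that insert.hyps(2) by (intro arg_cong[where f=det] Cart_lambda_cong) auto
  have "det (\<chi> i. if i \<in> insert k K then a i + e i else c i) =
      det (\<chi> i. if i = k then a i + e i else if i \<in> K then a i + e i else c i)"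
    by (intro arg_cong[where f=det] Cart_lambda_cong) auto
  also have "\<dots> = det (\<chi> i. if i \<in> K then a i + e i else (c(k := a k)) i) +
      det (\<chi> i. if i \<in> K then a i + e i else (c(k := e k)) i)"
    unfolding det_row_add using insert.hyps(2)
    by (intro arg_cong2[where f="(+)"] arg_cong[where f=det] Cart_lambda_cong) auto
  also have "\<dots> = (\<Sum>T\<in>Pow K. E (insert k T)) + (\<Sum>T\<in>Pow K. E T)"
    unfolding insert.IH using a_part e_part by simp
  also have "\<dots> = (\<Sum>T\<in>Pow (insert k K). E T)"
  proof -
    have "inj_on (insert k) (Pow K)"
      using insert.hyps(2) unfolding inj_on_def by (meson PowD insert_ident subsetD)
    moreover have "Pow K \<inter> insert k ` Pow K = {}" using insert.hyps(2) by auto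
    ultimately show ?thesis
      unfolding Pow_insert using insert.hyps(1)
      by (simp add: sum.union_disjoint sum.reindex add.commute)
  qed
  finally show ?case unfolding E_def .
qed

lemma det_add_rows:
  fixes a e :: "'n::finite \<Rightarrow> 'a::comm_ring_1^'n"
  shows "det (\<chi> i. a i + e i) = (\<Sum>T\<in>Pow UNIV. det (\<chi> i. if i \<in> T then a i else e i))"
proof -
  have "(\<chi> i. if i \<in> T then a i else if i \<in> UNIV then e i else 0) = (\<chi> i. if i \<in> T then a i else e i)"
    for T :: "'n set"
    by (simp add: vec_eq_iff)
  then show ?thesis using det_add_rows_partial[of UNIV a e "\<lambda>_. 0"] by simp
qed

text \<open>A summand of the multilinear expansion of \<open>det (\<chi> i. a i + e i)\<close>. If it does not vanish, its
  rows \<open>a i\<close> are independent: at most \<open>dim W\<close> of them lie in \<open>W\<close>, and not all \<open>a i\<close> with \<open>i \<in> J\<close>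
  occur, so some row is a small \<open>e i\<close>.\<close>
lemma abs_det_mixed_rows_near_subspace:
  fixes a e :: "'n \<Rightarrow> real^'n"
  assumes aW: "\<And>i. i \<in> J \<Longrightarrow> a i \<in> W" and dep: "\<not> independent_family a J"
    and aR: "\<And>i. i \<in> J \<Longrightarrow> norm (a i) \<le> R" and a1: "\<And>i. i \<notin> J \<Longrightarrow> norm (a i) \<le> 1"
    and e\<delta>: "\<And>i. norm (e i) \<le> \<delta>" and R1: "1 \<le> R" and \<delta>1: "\<delta> \<le> 1"
  shows "\<bar>det (\<chi> i. if i \<in> T then a i else e i)\<bar> \<le> fact CARD('n) * (\<delta> * R ^ dim W)"
proof -
  have \<delta>0: "0 \<le> \<delta>" using norm_ge_zero[of "e undefined"] e\<delta>[of undefined] by linarith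
  define r where "r i = (if i \<in> T then a i else e i)" for i
  show ?thesis
  proof (cases "det (\<chi> i. r i) = 0")
    case True
    then show ?thesis using \<delta>0 R1 by (simp add: r_def)
  next
    case False
    then have ind: "independent_family r UNIV" by (simp add: det_nonzero_iff_independent_rows)
    have ind_a: "independent_family a (T \<inter> I)" if "I \<subseteq> J" for I
    proof -
      have "independent_family r (T \<inter> I)" using independent_family_subset[OF ind] by simp
      then show ?thesis using independent_family_cong[of "T \<inter> I" r a] unfolding r_def by simp
    qed
    have "\<not> J \<subseteq> T" using ind_a[of J] dep by (auto simp: Int_absorb1)
    then obtain i0 where i0: "i0 \<in> J" "i0 \<notin> T" by blast
    have card: "card (T \<inter> J) \<le> dim W"
      using ind_a[of J] aW by (intro independent_family_card_le_dim) auto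
    have "(\<Prod>i\<in>UNIV. norm (r i)) = norm (r i0) * (\<Prod>i\<in>UNIV - {i0}. norm (r i))"
      by (simp add: prod.remove)
    also have "\<dots> \<le> \<delta> * (\<Prod>i\<in>UNIV - {i0}. if i \<in> T \<inter> J then R else 1)"
    proof (rule mult_mono)
      show "norm (r i0) \<le> \<delta>" using i0 e\<delta> unfolding r_def by simp
      show "(\<Prod>i\<in>UNIV - {i0}. norm (r i)) \<le> (\<Prod>i\<in>UNIV - {i0}. if i \<in> T \<inter> J then R else 1)"
        using aR a1 e\<delta> \<delta>1 by (intro prod_mono) (auto simp: r_def intro: order_trans)
      show "0 \<le> (\<Prod>i\<in>UNIV - {i0}. norm (r i))" by (simp add: prod_nonneg)
    qed (rule \<delta>0)
    also have "(\<Prod>i\<in>UNIV - {i0}. if i \<in> T \<inter> J then R else 1) = R ^ card (T \<inter> J)"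
    proof -
      have "(UNIV - {i0}) \<inter> {i. i \<in> T \<inter> J} = T \<inter> J" using i0 by auto
      then show ?thesis by (simp add: prod.If_cases)
    qed
    also have "\<delta> * R ^ card (T \<inter> J) \<le> \<delta> * R ^ dim W"
      using card R1 \<delta>0 by (intro mult_left_mono power_increasing) auto
    finally have prod_le: "(\<Prod>i\<in>UNIV. norm (r i)) \<le> \<delta> * R ^ dim W" .
    have "\<bar>det (\<chi> i. r i)\<bar> \<le> fact CARD('n) * (\<Prod>i\<in>UNIV. norm (r i))"
      using abs_det_le_prod_row_norms[of "\<chi> i. r i"] by simp
    also have "\<dots> \<le> fact CARD('n) * (\<delta> * R ^ dim W)"
      using prod_le by (rule mult_left_mono) simp
    finally show ?thesis unfolding r_def .
  qed
qed

lemma abs_det_rows_near_subspace: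
  fixes a e :: "'n \<Rightarrow> real^'n"
  assumes "\<And>i. i \<in> J \<Longrightarrow> a i \<in> W" "\<not> independent_family a J"
    and "\<And>i. i \<in> J \<Longrightarrow> norm (a i) \<le> R" "\<And>i. i \<notin> J \<Longrightarrow> norm (a i) \<le> 1"
    and "\<And>i. norm (e i) \<le> \<delta>" "1 \<le> R" "\<delta> \<le> 1"
  shows "\<bar>det (\<chi> i. a i + e i)\<bar> \<le> 2 ^ CARD('n) * fact CARD('n) * (\<delta> * R ^ dim W)"
proof -
  have "\<bar>det (\<chi> i. a i + e i)\<bar> \<le> (\<Sum>T\<in>Pow UNIV. \<bar>det (\<chi> i. if i \<in> T then a i else e i)\<bar>)"
    unfolding det_add_rows by (rule sum_abs)
  also have "\<dots> \<le> (\<Sum>T\<in>Pow (UNIV :: 'n set). fact CARD('n) * (\<delta> * R ^ dim W))"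
    using abs_det_mixed_rows_near_subspace[OF assms] by (intro sum_mono)
  also have "\<dots> = 2 ^ CARD('n) * fact CARD('n) * (\<delta> * R ^ dim W)"
    by (simp add: card_Pow)
  finally show ?thesis .
qed

text \<open>Completed by standard basis vectors, the family \<open>X\<close> forms an integer matrix with \<open>|det| \<ge> 1\<close>;
  splitting its rows as \<open>Y k + (X k - Y k)\<close> bounds \<open>|det|\<close> from above.\<close>
lemma integer_family_near_subspace:
  fixes X Y :: "'i \<Rightarrow> real^'n"
  assumes fin: "finite I" and ind: "independent_family X I" and dep: "\<not> independent_family Y I"
    and X_int: "\<And>k. X k \<in> int_lattice" and Y_W: "\<And>k. Y k \<in> W"
    and Y_R: "\<And>k. k \<in> I \<Longrightarrow> norm (Y k) \<le> R" and XY_\<delta>: "\<And>k. k \<in> I \<Longrightarrow> norm (X k - Y k) \<le> \<delta>"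
    and "1 \<le> R" "0 \<le> \<delta>" "\<delta> \<le> 1"
  shows "1 \<le> 2 ^ CARD('n) * fact CARD('n) * (\<delta> * R ^ dim W)"
proof -
  obtain \<beta> :: "'n \<Rightarrow> real^'n" and h where \<beta>_ind: "independent_family \<beta> UNIV" and h: "inj_on h I"
    and \<beta>h: "\<And>k. k \<in> I \<Longrightarrow> \<beta> (h k) = X k" and \<beta>_Basis: "\<And>i. i \<notin> h ` I \<Longrightarrow> \<beta> i \<in> Basis"
    using independent_family_extend_by_Basis[OF ind fin] by blast
  define a where "a i = (if i \<in> h ` I then Y (inv_into I h i) else \<beta> i)" for i
  define e where "e i = (if i \<in> h ` I then \<beta> i - a i else 0)" for i
  have a_h: "a (h k) = Y k" if "k \<in> I" for k using h that by (simp add: a_def)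
  have \<beta>_int: "\<beta> i \<in> int_lattice" for i
    using \<beta>h X_int \<beta>_Basis Basis_in_int_lattice by (cases "i \<in> h ` I") auto
  have "1 \<le> \<bar>det (\<chi> i. \<beta> i)\<bar>" by (rule one_le_abs_det_int_lattice_rows[OF \<beta>_int \<beta>_ind])
  also have "(\<chi> i. \<beta> i) = (\<chi> i. a i + e i)" by (simp add: a_def e_def fun_eq_iff)
  also have "\<bar>det (\<chi> i. a i + e i)\<bar> \<le> 2 ^ CARD('n) * fact CARD('n) * (\<delta> * R ^ dim W)"
  proof (rule abs_det_rows_near_subspace)
    show "a i \<in> W" if "i \<in> h ` I" for i using that Y_W by (simp add: a_def)
    show "\<not> independent_family a (h ` I)"
    proof
      assume "independent_family a (h ` I)"
      then have "independent_family (a \<circ> h) I"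
        using h by (intro independent_family_reindex) (simp_all add: bij_betw_def)
      moreover have "independent_family (a \<circ> h) I \<longleftrightarrow> independent_family Y I"
        using a_h by (intro independent_family_cong) simp
      ultimately show False using dep by simp
    qed
    show "norm (a i) \<le> R" if "i \<in> h ` I" for i using that a_h Y_R by auto
    show "norm (a i) \<le> 1" if "i \<notin> h ` I" for i using that \<beta>_Basis by (simp add: a_def)
    show "norm (e i) \<le> \<delta>" for i
      using \<beta>h a_h XY_\<delta> \<open>0 \<le> \<delta>\<close> by (auto simp: e_def)
  qed fact+
  finally show ?thesis .
qed

section \<open>Orbits of linear maps\<close>

lemma linear_funpow: "linear (A :: 'a::real_vector \<Rightarrow> 'a) \<Longrightarrow> linear (A ^^ k)"
proof (induction k)
  case 0
  show ?case using real_vector.linear_id by (metis funpow_0 eq_id_iff)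
next
  case (Suc k)
  then have "linear (A \<circ> A ^^ k)" using linear_compose by blast
  then show ?case by (simp add: o_def)
qed

lemma linear_orbit_sum:
  fixes A :: "'a::real_vector \<Rightarrow> 'a"
  assumes "linear A"
  shows "linear (\<lambda>x. \<Sum>k\<le>m. b k *\<^sub>R (A ^^ k) x)"
proof (rule linearI)
  show "(\<Sum>k\<le>m. b k *\<^sub>R (A ^^ k) (x + y)) =
      (\<Sum>k\<le>m. b k *\<^sub>R (A ^^ k) x) + (\<Sum>k\<le>m. b k *\<^sub>R (A ^^ k) y)" for x y
    using linear_funpow[OF assms] by (simp add: linear_add scaleR_add_right sum.distrib)
  show "(\<Sum>k\<le>m. b k *\<^sub>R (A ^^ k) (r *\<^sub>R x)) = r *\<^sub>R (\<Sum>k\<le>m. b k *\<^sub>R (A ^^ k) x)" for r x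
    using linear_funpow[OF assms] by (simp add: linear_scale scaleR_sum_right mult.commute)
qed

lemma funpow_inverse_cancel:
  fixes A B :: "'a \<Rightarrow> 'a"
  assumes "\<And>y. B (A y) = y"
  shows "(B ^^ k) ((A ^^ k) y) = y"
proof (induction k arbitrary: y)
  case (Suc k)
  have "(B ^^ Suc k) ((A ^^ Suc k) y) = B ((B ^^ k) ((A ^^ k) (A y)))"
    by (simp add: funpow_swap1)
  then show ?case using Suc assms by simp
qed simp

lemma funpow_inverse_diff:
  fixes A B :: "'a \<Rightarrow> 'a"
  assumes "\<And>y. B (A y) = y" "k \<le> m"
  shows "(B ^^ m) ((A ^^ k) y) = (B ^^ (m - k)) y"
proof -
  have "B ^^ m = B ^^ (m - k) \<circ> B ^^ k" using assms(2) by (simp add: funpow_add[symmetric])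
  then show ?thesis using funpow_inverse_cancel[of B A, OF assms(1)] by simp
qed

lemma funpow_closed: "(\<And>x. x \<in> V \<Longrightarrow> f x \<in> V) \<Longrightarrow> x \<in> V \<Longrightarrow> (f ^^ k) x \<in> V"
  by (induction k) auto

lemma funpow_growth_upper:
  fixes N :: "'a \<Rightarrow> real"
  assumes "\<And>x. x \<in> V \<Longrightarrow> f x \<in> V" "\<And>x. x \<in> V \<Longrightarrow> N (f x) \<le> c * N x" "0 \<le> c" "x \<in> V"
  shows "N ((f ^^ k) x) \<le> c ^ k * N x"
proof (induction k)
  case (Suc k)
  have "N ((f ^^ Suc k) x) \<le> c * N ((f ^^ k) x)"
    using assms(2) funpow_closed[of V f, OF assms(1) assms(4)] by simp
  also have "\<dots> \<le> c * (c ^ k * N x)" by (rule mult_left_mono[OF Suc.IH assms(3)])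
  finally show ?case by simp
qed simp

lemma funpow_growth_lower:
  fixes N :: "'a \<Rightarrow> real"
  assumes "\<And>x. x \<in> V \<Longrightarrow> f x \<in> V" "\<And>x. x \<in> V \<Longrightarrow> c * N x \<le> N (f x)" "0 \<le> c" "x \<in> V"
  shows "c ^ k * N x \<le> N ((f ^^ k) x)"
proof (induction k)
  case (Suc k)
  have "c ^ Suc k * N x \<le> c * N ((f ^^ k) x)"
    using mult_left_mono[OF Suc.IH assms(3)] by (simp add: mult.assoc)
  also have "\<dots> \<le> N ((f ^^ Suc k) x)"
    using assms(2) funpow_closed[of V f, OF assms(1) assms(4)] by simp
  finally show ?case .
qed simp

lemma norm_funpow_le:
  fixes A :: "'a::real_normed_vector \<Rightarrow> 'a"
  assumes "\<And>x. norm (A x) \<le> B * norm x" "1 \<le> B" "k \<le> n"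
  shows "norm ((A ^^ k) x) \<le> B ^ n * norm x"
proof -
  have "norm ((A ^^ k) x) \<le> B ^ k * norm x"
    using assms(1,2) by (intro funpow_growth_upper[of UNIV]) auto
  also have "\<dots> \<le> B ^ n * norm x"
    using assms(2,3) by (intro mult_right_mono power_increasing) auto
  finally show ?thesis .
qed

lemma funpow_inner_adjoint:
  fixes f g :: "'a::real_inner \<Rightarrow> 'a"
  assumes "\<And>u v. g u \<bullet> v = u \<bullet> f v"
  shows "(g ^^ k) u \<bullet> v = u \<bullet> (f ^^ k) v"
proof (induction k arbitrary: v)
  case (Suc k)
  have "(g ^^ Suc k) u \<bullet> v = (g ^^ k) u \<bullet> f v" using assms by simp
  also have "\<dots> = u \<bullet> (f ^^ Suc k) v" using Suc by (simp add: funpow_swap1)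
  finally show ?case .
qed simp

lemma orbit_relation_shift:
  fixes A :: "'a::real_vector \<Rightarrow> 'a"
  assumes "linear A" "b m \<noteq> 0" "(\<Sum>k\<le>m. b k *\<^sub>R (A ^^ k) x) = 0"
  shows "(A ^^ (t + m)) x = - (1 / b m) *\<^sub>R (\<Sum>k<m. b k *\<^sub>R (A ^^ (t + k)) x)"
proof -
  have "{..m} = insert m {..<m}" by auto
  then have "b m *\<^sub>R (A ^^ m) x + (\<Sum>k<m. b k *\<^sub>R (A ^^ k) x) = 0"
    using assms(3) by simp
  then have "b m *\<^sub>R (A ^^ m) x = - (\<Sum>k<m. b k *\<^sub>R (A ^^ k) x)"
    by (simp add: eq_neg_iff_add_eq_0)
  then have top: "(A ^^ m) x = - (1 / b m) *\<^sub>R (\<Sum>k<m. b k *\<^sub>R (A ^^ k) x)"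
  proof -
    assume eq: "b m *\<^sub>R (A ^^ m) x = - (\<Sum>k<m. b k *\<^sub>R (A ^^ k) x)"
    have "(A ^^ m) x = (1 / b m) *\<^sub>R (b m *\<^sub>R (A ^^ m) x)" using assms(2) by simp
    also have "\<dots> = - (1 / b m) *\<^sub>R (\<Sum>k<m. b k *\<^sub>R (A ^^ k) x)" unfolding eq by simp
    finally show ?thesis .
  qed
  have "(A ^^ (t + m)) x = (A ^^ t) ((A ^^ m) x)" by (simp add: funpow_add)
  also have "\<dots> = - (1 / b m) *\<^sub>R (\<Sum>k<m. b k *\<^sub>R (A ^^ t) ((A ^^ k) x))"
    unfolding top using linear_funpow[OF assms(1)] by (simp add: linear_sum linear_scale linear_neg)
  finally show ?thesis by (simp add: funpow_add)
qed

lemma orbit_relation_transfer: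
  fixes A :: "'a::real_vector \<Rightarrow> 'a" and B :: "'b::real_vector \<Rightarrow> 'b" and T :: "'a \<Rightarrow> 'b"
  assumes lin: "linear A" "linear B" "linear T" and bm: "b m \<noteq> 0"
    and relA: "(\<Sum>k\<le>m. b k *\<^sub>R (A ^^ k) x) = 0" and relB: "(\<Sum>k\<le>m. b k *\<^sub>R (B ^^ k) y) = 0"
    and init: "\<And>k. k < m \<Longrightarrow> T ((A ^^ k) x) = (B ^^ k) y"
  shows "T ((A ^^ j) x) = (B ^^ j) y"
proof (induction j rule: less_induct)
  case (less j)
  show ?case
  proof (cases "j < m")
    case True
    then show ?thesis by (rule init)
  next
    case False
    then obtain t where j: "j = t + m" by (metis add.commute le_add_diff_inverse not_less)
    have "T ((A ^^ j) x) = - (1 / b m) *\<^sub>R (\<Sum>k<m. b k *\<^sub>R T ((A ^^ (t + k)) x))"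
      unfolding j orbit_relation_shift[OF lin(1) bm relA] using lin(3)
      by (simp add: linear_sum linear_scale linear_neg)
    also have "\<dots> = - (1 / b m) *\<^sub>R (\<Sum>k<m. b k *\<^sub>R (B ^^ (t + k)) y)"
      using less j by (intro arg_cong[where f="\<lambda>z. - (1 / b m) *\<^sub>R z"] sum.cong) auto
    also have "\<dots> = (B ^^ j) y"
      unfolding j orbit_relation_shift[OF lin(2) bm relB] ..
    finally show ?thesis .
  qed
qed

lemma orbit_relation_reverse:
  fixes A Ainv :: "'a::real_vector \<Rightarrow> 'a"
  assumes "linear Ainv" "\<And>y. Ainv (A y) = y" "(\<Sum>k\<le>m. b k *\<^sub>R (A ^^ k) x) = 0"
  shows "(\<Sum>k\<le>m. b (m - k) *\<^sub>R (Ainv ^^ k) x) = 0"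
proof -
  have lin: "linear (Ainv ^^ m)" using linear_funpow[OF assms(1)] .
  have "0 = (Ainv ^^ m) (\<Sum>k\<le>m. b k *\<^sub>R (A ^^ k) x)" using assms(3) lin by (simp add: linear_0)
  also have "\<dots> = (\<Sum>k\<le>m. b k *\<^sub>R (Ainv ^^ (m - k)) x)"
    using lin funpow_inverse_diff[of Ainv A, OF assms(2)] by (simp add: linear_sum linear_scale)
  also have "\<dots> = (\<Sum>k\<le>m. b (m - k) *\<^sub>R (Ainv ^^ k) x)"
    by (rule sum.reindex_bij_witness[where i="\<lambda>k. m - k" and j="\<lambda>k. m - k"]) auto
  finally show ?thesis by simp
qed

lemma independent_orbit_reverse:
  fixes A Ainv :: "'a::real_vector \<Rightarrow> 'a"
  assumes "linear A" "\<And>y. A (Ainv y) = y" "independent_family (\<lambda>k. (A ^^ k) x) {..<m}"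
  shows "independent_family (\<lambda>k. (Ainv ^^ k) x) {..<m}"
  unfolding independent_family_def
proof (intro allI impI)
  fix c assume rel: "(\<Sum>k<m. c k *\<^sub>R (Ainv ^^ k) x) = 0"
  have lin: "linear (A ^^ (m - 1))" using linear_funpow[OF assms(1)] .
  have "0 = (A ^^ (m - 1)) (\<Sum>k<m. c k *\<^sub>R (Ainv ^^ k) x)" using rel lin by (simp add: linear_0)
  also have "\<dots> = (\<Sum>k<m. c k *\<^sub>R (A ^^ (m - 1 - k)) x)"
    using lin funpow_inverse_diff[of A Ainv, OF assms(2)] by (simp add: linear_sum linear_scale)
  also have "\<dots> = (\<Sum>k<m. c (m - 1 - k) *\<^sub>R (A ^^ k) x)"
    by (rule sum.reindex_bij_witness[where i="\<lambda>k. m - 1 - k" and j="\<lambda>k. m - 1 - k"]) auto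
  finally have "\<forall>k<m. c (m - 1 - k) = 0"
    using assms(3)[unfolded independent_family_def, rule_format, of "\<lambda>k. c (m - 1 - k)"] by simp
  show "\<forall>k\<in>{..<m}. c k = 0"
  proof
    fix k assume "k \<in> {..<m}"
    then have "m - 1 - k < m" "m - 1 - (m - 1 - k) = k" by auto
    then show "c k = 0" using \<open>\<forall>k<m. c (m - 1 - k) = 0\<close> by metis
  qed
qed

text \<open>\<open>\<Sum>\<^sub>k\<^sub>\<le>\<^sub>m b\<^sub>k t\<^sup>k\<close> is the minimal polynomial of \<open>x\<close> with respect to \<open>A\<close>, up to a scalar.\<close>
definition minimal_relation :: "('a::real_vector \<Rightarrow> 'a) \<Rightarrow> 'a \<Rightarrow> nat \<Rightarrow> (nat \<Rightarrow> real) \<Rightarrow> bool" where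
  "minimal_relation A x m b \<longleftrightarrow> b m \<noteq> 0 \<and> (\<Sum>k\<le>m. b k *\<^sub>R (A ^^ k) x) = 0 \<and>
     independent_family (\<lambda>k. (A ^^ k) x) {..<m}"

lemma minimal_relation_exists:
  fixes A :: "'a::euclidean_space \<Rightarrow> 'a"
  assumes "x \<noteq> 0"
  obtains m b where "0 < m" "m \<le> DIM('a)" "minimal_relation A x m b"
proof -
  define dep where "dep m \<longleftrightarrow> \<not> independent_family (\<lambda>k. (A ^^ k) x) {..m}" for m
  have "dep DIM('a)"
    using independent_family_card_le_dim[of "\<lambda>k. (A ^^ k) x" "{..DIM('a)}" UNIV]
    unfolding dep_def by auto
  define m where "m = (LEAST m. dep m)"
  have dep_m: "dep m" unfolding m_def by (rule LeastI) fact
  have m0: "m \<noteq> 0"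
  proof
    assume "m = 0"
    then have "\<not> independent_family (\<lambda>k. (A ^^ k) x) {0}" using dep_m by (simp add: dep_def)
    then show False using assms by (simp add: independent_family_def)
  qed
  have ind: "independent_family (\<lambda>k. (A ^^ k) x) {..<m}"
  proof -
    have "\<not> dep (m - 1)" using not_less_Least[of "m - 1" dep] m0 unfolding m_def by simp
    moreover have "{..<m} = {..m - 1}" using m0 by auto
    ultimately show ?thesis by (simp add: dep_def)
  qed
  obtain b where rel: "(\<Sum>k\<le>m. b k *\<^sub>R (A ^^ k) x) = 0" and nz: "\<exists>k\<le>m. b k \<noteq> 0"
    using dep_m unfolding dep_def independent_family_def by blast
  have "b m \<noteq> 0"
  proof
    assume "b m = 0"
    then have "(\<Sum>k<m. b k *\<^sub>R (A ^^ k) x) = 0"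
      using rel by (simp add: lessThan_Suc_atMost[symmetric])
    then have "\<forall>k<m. b k = 0" using ind unfolding independent_family_def by blast
    then show False using nz \<open>b m = 0\<close> by (metis le_neq_implies_less)
  qed
  moreover have "m \<le> DIM('a)"
    using independent_family_card_le_dim[OF ind, of UNIV] by simp
  ultimately show ?thesis
    using that[of m b] m0 rel ind unfolding minimal_relation_def by simp
qed

lemma minimal_relation_lowest_coeff:
  assumes "linear A" "inj A" "minimal_relation A x m b"
  shows "b 0 \<noteq> 0"
proof (cases m)
  case 0
  then show ?thesis using assms(3) by (simp add: minimal_relation_def)
next
  case (Suc m')
  have rel: "(\<Sum>k\<le>Suc m'. b k *\<^sub>R (A ^^ k) x) = 0" and bm: "b (Suc m') \<noteq> 0"
    and ind: "independent_family (\<lambda>k. (A ^^ k) x) {..<Suc m'}"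
    using assms(3) Suc by (auto simp: minimal_relation_def)
  show ?thesis
  proof
    assume b0: "b 0 = 0"
    have "(\<Sum>k\<le>Suc m'. b k *\<^sub>R (A ^^ k) x) = (\<Sum>k\<le>m'. b (Suc k) *\<^sub>R (A ^^ Suc k) x)"
      unfolding sum.atMost_Suc_shift using b0 by simp
    also have "\<dots> = A (\<Sum>k\<le>m'. b (Suc k) *\<^sub>R (A ^^ k) x)"
      using assms(1) by (simp add: linear_sum linear_scale)
    finally have "A (\<Sum>k\<le>m'. b (Suc k) *\<^sub>R (A ^^ k) x) = 0"
      using rel by (simp only:)
    then have "A (\<Sum>k\<le>m'. b (Suc k) *\<^sub>R (A ^^ k) x) = A 0"
      using linear_0[OF assms(1)] by (simp only:)
    then have "(\<Sum>k\<le>m'. b (Suc k) *\<^sub>R (A ^^ k) x) = 0"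
      by (rule injD[OF assms(2)])
    then have "(\<Sum>k<Suc m'. b (Suc k) *\<^sub>R (A ^^ k) x) = 0"
      by (simp only: lessThan_Suc_atMost)
    then have "b (Suc m') = 0"
      by (rule ind[unfolded independent_family_def, rule_format, of "\<lambda>k. b (Suc k)"]) simp
    then show False using bm by simp
  qed
qed

lemma minimal_relation_reverse:
  fixes A Ainv :: "'a::real_vector \<Rightarrow> 'a"
  assumes "linear A" "linear Ainv" "\<And>y. Ainv (A y) = y" "\<And>y. A (Ainv y) = y"
    and "minimal_relation A x m b" "b 0 \<noteq> 0"
  shows "minimal_relation Ainv x m (\<lambda>k. b (m - k))"
  using assms(3-6) orbit_relation_reverse[OF assms(2,3)] independent_orbit_reverse[OF assms(1,4)]
  unfolding minimal_relation_def by simp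

lemma minimal_relation_dominates:
  fixes A :: "'a::euclidean_space \<Rightarrow> 'a" and B :: "'b::real_normed_vector \<Rightarrow> 'b"
  assumes "linear A" "linear B" "minimal_relation A x m b" "(\<Sum>k\<le>m. b k *\<^sub>R (B ^^ k) y) = 0"
  obtains K where "K > 0" "\<And>j. norm ((B ^^ j) y) \<le> K * norm ((A ^^ j) x)"
proof -
  have bm: "b m \<noteq> 0" and relA: "(\<Sum>k\<le>m. b k *\<^sub>R (A ^^ k) x) = 0"
    and ind: "independent_family (\<lambda>k. (A ^^ k) x) {..<m}"
    using assms(3) by (auto simp: minimal_relation_def)
  obtain T where T: "linear T" "\<And>k. k \<in> {..<m} \<Longrightarrow> T ((A ^^ k) x) = (B ^^ k) y"
    using independent_family_linear_extension[OF ind, of "\<lambda>k. (B ^^ k) y"] by blast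
  have orbit: "T ((A ^^ j) x) = (B ^^ j) y" for j
    using orbit_relation_transfer[OF assms(1,2) T(1) bm relA assms(4)] T(2) by simp
  obtain K where K: "K > 0" "\<And>z. norm (T z) \<le> K * norm z"
    using linear_bounded_pos[OF T(1)] by blast
  show ?thesis
  proof (rule that[OF K(1)])
    show "norm ((B ^^ j) y) \<le> K * norm ((A ^^ j) x)" for j
      using K(2)[of "(A ^^ j) x"] orbit[of j] by simp
  qed
qed

lemma nonpos_if_geometrically_dominated:
  fixes x K p q :: real
  assumes "0 \<le> p" "p < q" "\<And>j. q ^ j * x \<le> K * p ^ j"
  shows "x \<le> 0"
proof -
  have q: "q > 0" using assms(1,2) by simp
  have "x \<le> K * (p / q) ^ j" for j
    using assms(3)[of j] q by (simp add: power_divide field_simps)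
  moreover have "(\<lambda>j. K * (p / q) ^ j) \<longlonglongrightarrow> K * 0"
    using assms(1,2) q by (intro tendsto_mult tendsto_const LIMSEQ_power_zero) simp_all
  ultimately show ?thesis by (simp add: LIMSEQ_le_const)
qed

lemma le_if_mult_self_le:
  fixes y c :: real
  assumes "0 \<le> y" "0 \<le> c" "y * y \<le> c * y"
  shows "y \<le> c"
  using assms by (cases "y = 0") (auto simp: mult_le_cancel_right)

lemma one_le_mult_real: "1 \<le> x \<Longrightarrow> 1 \<le> y \<Longrightarrow> 1 \<le> x * (y :: real)"
  using mult_mono[of 1 x 1 y] by simp

section \<open>Norms adapted to a matrix\<close>

lemma matrix_inv_works:
  fixes A :: "real^'n^'n"
  assumes "invertible A"
  shows "A ** matrix_inv A = mat 1" "matrix_inv A ** A = mat 1"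
  using someI_ex[OF assms[unfolded invertible_def]] unfolding matrix_inv_def by auto

lemma invertible_norm_lower:
  fixes A :: "real^'n^'n"
  assumes "invertible A"
  obtains a where "a > 0" "\<And>x. a * norm x \<le> norm (A *v x)"
proof (rule linear_invertible_bounded_below_pos)
  show "linear ((*v) A)" "linear ((*v) (matrix_inv A))" by (simp_all add: matrix_vector_mul_linear)
  show "(*v) (matrix_inv A) \<circ> (*v) A = id"
    using matrix_inv_works[OF assms] by (simp add: fun_eq_iff matrix_vector_mul_assoc)
qed (rule that)

lemma invertible_mult_nonzero:
  fixes A :: "real^'n^'n"
  shows "invertible A \<Longrightarrow> x \<noteq> 0 \<Longrightarrow> A *v x \<noteq> 0"
  by (metis injD inj_matrix_vector_mult matrix_vector_mult_0_right)

lemma restr_ratio_bdd_above: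
  fixes A F :: "real^'n^'n"
  assumes "invertible A"
  shows "bdd_above {norm (A *v (F *v x)) / norm (A *v x) |x. x \<in> V \<and> x \<noteq> 0}"
proof -
  obtain a where a: "a > 0" "\<And>x. a * norm x \<le> norm (A *v x)"
    using invertible_norm_lower[OF assms] by blast
  obtain b where b: "b > 0" "\<And>x. norm ((A ** F) *v x) \<le> b * norm x"
    using linear_bounded_pos[OF matrix_vector_mul_linear[of "A ** F"]] by blast
  have "norm (A *v (F *v x)) / norm (A *v x) \<le> b / a" if "x \<noteq> 0" for x
  proof -
    have "norm (A *v (F *v x)) \<le> (b / a) * (a * norm x)"
      using b(2)[of x] a(1) by (simp add: matrix_vector_mul_assoc)
    also have "\<dots> \<le> (b / a) * norm (A *v x)"
      using a b(1) by (intro mult_left_mono) auto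
    finally have "norm (A *v (F *v x)) \<le> (b / a) * norm (A *v x)" .
    moreover have "norm (A *v x) > 0" using invertible_mult_nonzero[OF assms that] by simp
    ultimately show ?thesis by (simp add: divide_le_eq)
  qed
  then show ?thesis by (intro bdd_aboveI[of _ "b / a"]) auto
qed

lemma restr_norm_bound:
  fixes A F :: "real^'n^'n"
  assumes "invertible A" "x \<in> V"
  shows "norm (A *v (F *v x)) \<le> restr_norm (\<lambda>x. norm (A *v x)) F V * norm (A *v x)"
proof (cases "x = 0")
  case False
  then have pos: "norm (A *v x) > 0" using invertible_mult_nonzero[OF assms(1)] by simp
  have "norm (A *v (F *v x)) / norm (A *v x) \<le> restr_norm (\<lambda>x. norm (A *v x)) F V"
    unfolding restr_norm_def
    by (rule cSup_upper[OF _ restr_ratio_bdd_above[OF assms(1)]]) (use assms(2) False in blast)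
  then show ?thesis using pos by (simp add: divide_le_eq)
qed simp

lemma restr_conorm_bound:
  fixes A F :: "real^'n^'n"
  assumes "invertible A" "x \<in> V"
  shows "restr_conorm (\<lambda>x. norm (A *v x)) F V * norm (A *v x) \<le> norm (A *v (F *v x))"
proof (cases "x = 0")
  case False
  then have pos: "norm (A *v x) > 0" using invertible_mult_nonzero[OF assms(1)] by simp
  have "restr_conorm (\<lambda>x. norm (A *v x)) F V \<le> norm (A *v (F *v x)) / norm (A *v x)"
    unfolding restr_conorm_def
    by (rule cInf_lower[OF _ bdd_belowI[of _ 0]]) (use assms(2) False in auto)
  then show ?thesis using pos by (simp add: le_divide_eq)
qed simp

lemma restr_norm_nonneg:
  fixes A F :: "real^'n^'n"
  assumes "invertible A" "x \<in> V" "x \<noteq> 0"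
  shows "0 \<le> restr_norm (\<lambda>x. norm (A *v x)) F V"
proof -
  have "0 \<le> restr_norm (\<lambda>x. norm (A *v x)) F V * norm (A *v x)"
    using restr_norm_bound[OF assms(1,2), of F] norm_ge_zero order_trans by blast
  moreover have "norm (A *v x) > 0" using invertible_mult_nonzero[OF assms(1,3)] by simp
  ultimately show ?thesis by (simp add: zero_le_mult_iff)
qed

section \<open>Partially hyperbolic linear maps\<close>

locale partially_hyperbolic_map =
  fixes F :: "real^'d^'d" and S C U :: "(real^'d) set"
  assumes invertible_F: "invertible F" and ph: "partially_hyperbolic F S C U"
begin

definition "decomp v = (THE (s, c, u). s \<in> S \<and> c \<in> C \<and> u \<in> U \<and> v = s + c + u)"

definition "proj_S v = fst (decomp v)"

definition "proj_C v = fst (snd (decomp v))"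

definition "proj_U v = snd (snd (decomp v))"

lemma cproj_eq_proj_C: "cproj S C U = proj_C"
  by (simp add: fun_eq_iff cproj_def proj_C_def decomp_def)

lemma direct_splitting: "direct_splitting S C U"
  using ph unfolding partially_hyperbolic_def by blast

lemma subspace_S: "subspace S" and subspace_C: "subspace C" and subspace_U: "subspace U"
  using direct_splitting unfolding direct_splitting_def by auto

lemma decomp_unique: "\<exists>!x. case x of (s, c, u) \<Rightarrow> s \<in> S \<and> c \<in> C \<and> u \<in> U \<and> v = s + c + u"
  using direct_splitting unfolding direct_splitting_def by blast

lemma proj_mem: "proj_S v \<in> S" "proj_C v \<in> C" "proj_U v \<in> U"
  and proj_sum: "proj_S v + proj_C v + proj_U v = v"
proof -
  have "case decomp v of (s, c, u) \<Rightarrow> s \<in> S \<and> c \<in> C \<and> u \<in> U \<and> v = s + c + u"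
    unfolding decomp_def by (rule theI'[OF decomp_unique])
  then show "proj_S v \<in> S" "proj_C v \<in> C" "proj_U v \<in> U" "proj_S v + proj_C v + proj_U v = v"
    unfolding proj_S_def proj_C_def proj_U_def by (cases "decomp v", simp)+
qed

lemma proj_eq:
  assumes "s \<in> S" "c \<in> C" "u \<in> U" "v = s + c + u"
  shows "proj_S v = s" "proj_C v = c" "proj_U v = u"
proof -
  have "decomp v = (s, c, u)"
    unfolding decomp_def using assms by (intro the1_equality[OF decomp_unique]) auto
  then show "proj_S v = s" "proj_C v = c" "proj_U v = u"
    unfolding proj_S_def proj_C_def proj_U_def by auto
qed

lemma proj_of_S: "s \<in> S \<Longrightarrow> proj_S s = s \<and> proj_C s = 0 \<and> proj_U s = 0"
  using proj_eq[of s 0 0 s] subspace_C subspace_U by (auto simp: subspace_0)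

lemma proj_of_U: "u \<in> U \<Longrightarrow> proj_S u = 0 \<and> proj_C u = 0 \<and> proj_U u = u"
  using proj_eq[of 0 0 u u] subspace_S subspace_C by (auto simp: subspace_0)

lemma proj_commute:
  assumes "linear L" "\<And>x. x \<in> S \<Longrightarrow> L x \<in> S" "\<And>x. x \<in> C \<Longrightarrow> L x \<in> C" "\<And>x. x \<in> U \<Longrightarrow> L x \<in> U"
  shows "proj_S (L v) = L (proj_S v)" "proj_C (L v) = L (proj_C v)" "proj_U (L v) = L (proj_U v)"
proof -
  have "L v = L (proj_S v + proj_C v + proj_U v)" by (simp only: proj_sum)
  also have "\<dots> = L (proj_S v) + L (proj_C v) + L (proj_U v)" using assms(1) by (simp add: linear_add)
  finally have sum: "L v = L (proj_S v) + L (proj_C v) + L (proj_U v)" .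
  have "L (proj_S v) \<in> S" "L (proj_C v) \<in> C" "L (proj_U v) \<in> U"
    using assms(2-4) proj_mem by auto
  from proj_eq[OF this sum]
  show "proj_S (L v) = L (proj_S v)" "proj_C (L v) = L (proj_C v)" "proj_U (L v) = L (proj_U v)" .
qed

lemma linear_proj: "linear proj_S" "linear proj_C" "linear proj_U"
proof -
  have add: "proj_S (x + y) = proj_S x + proj_S y \<and> proj_C (x + y) = proj_C x + proj_C y \<and>
      proj_U (x + y) = proj_U x + proj_U y" for x y
  proof -
    have "x + y = (proj_S x + proj_C x + proj_U x) + (proj_S y + proj_C y + proj_U y)"
      by (simp only: proj_sum)
    also have "\<dots> = (proj_S x + proj_S y) + (proj_C x + proj_C y) + (proj_U x + proj_U y)"
      by (simp add: algebra_simps)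
    finally have sum: "x + y = (proj_S x + proj_S y) + (proj_C x + proj_C y) + (proj_U x + proj_U y)" .
    have "proj_S x + proj_S y \<in> S" "proj_C x + proj_C y \<in> C" "proj_U x + proj_U y \<in> U"
      using proj_mem subspace_S subspace_C subspace_U by (auto intro: subspace_add)
    from proj_eq[OF this sum] show ?thesis by simp
  qed
  have scale: "proj_S (r *\<^sub>R x) = r *\<^sub>R proj_S x \<and> proj_C (r *\<^sub>R x) = r *\<^sub>R proj_C x \<and>
      proj_U (r *\<^sub>R x) = r *\<^sub>R proj_U x" for r x
  proof -
    have "r *\<^sub>R x = r *\<^sub>R (proj_S x + proj_C x + proj_U x)" by (simp only: proj_sum)
    also have "\<dots> = r *\<^sub>R proj_S x + r *\<^sub>R proj_C x + r *\<^sub>R proj_U x"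
      by (simp add: scaleR_right_distrib)
    finally have sum: "r *\<^sub>R x = r *\<^sub>R proj_S x + r *\<^sub>R proj_C x + r *\<^sub>R proj_U x" .
    have "r *\<^sub>R proj_S x \<in> S" "r *\<^sub>R proj_C x \<in> C" "r *\<^sub>R proj_U x \<in> U"
      using proj_mem subspace_S subspace_C subspace_U by (auto intro: subspace_scale)
    from proj_eq[OF this sum] show ?thesis by simp
  qed
  show "linear proj_S" "linear proj_C" "linear proj_U"
    by (rule linearI, use add scale in blast, use add scale in blast)+
qed

definition "f x = F *v x"

definition "f_inv x = matrix_inv F *v x"

lemma f_f_inv: "f (f_inv x) = x" and f_inv_f: "f_inv (f x) = x"
  unfolding f_def f_inv_def using matrix_inv_works[OF invertible_F]
  by (simp_all add: matrix_vector_mul_assoc)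

lemma linear_f: "linear f" and linear_f_inv: "linear f_inv"
  unfolding f_def f_inv_def by (simp_all add: matrix_vector_mul_linear)

lemma f_image: "f ` S = S" "f ` C = C" "f ` U = U"
  using ph unfolding partially_hyperbolic_def f_def by blast+

lemma f_mem: "x \<in> S \<Longrightarrow> f x \<in> S" "x \<in> C \<Longrightarrow> f x \<in> C" "x \<in> U \<Longrightarrow> f x \<in> U"
  using f_image by auto

lemma f_inv_mem: "x \<in> S \<Longrightarrow> f_inv x \<in> S" "x \<in> C \<Longrightarrow> f_inv x \<in> C" "x \<in> U \<Longrightarrow> f_inv x \<in> U"
proof -
  have "f_inv x \<in> V" if img: "f ` V = V" and x: "x \<in> V" for V
  proof -
    obtain y where "y \<in> V" "x = f y" using img x by blast
    then show ?thesis by (simp add: f_inv_f)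
  qed
  then show "x \<in> S \<Longrightarrow> f_inv x \<in> S" "x \<in> C \<Longrightarrow> f_inv x \<in> C" "x \<in> U \<Longrightarrow> f_inv x \<in> U"
    using f_image by blast+
qed

lemma funpow_f_mem:
  "x \<in> S \<Longrightarrow> (f ^^ k) x \<in> S" "x \<in> C \<Longrightarrow> (f ^^ k) x \<in> C" "x \<in> U \<Longrightarrow> (f ^^ k) x \<in> U"
  by (induction k) (simp_all add: f_mem)

lemma funpow_f_inv_mem:
  "x \<in> S \<Longrightarrow> (f_inv ^^ k) x \<in> S" "x \<in> C \<Longrightarrow> (f_inv ^^ k) x \<in> C" "x \<in> U \<Longrightarrow> (f_inv ^^ k) x \<in> U"
  by (induction k) (simp_all add: f_inv_mem)

lemmas proj_funpow_f = proj_commute[OF linear_funpow[OF linear_f] funpow_f_mem]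

lemmas proj_funpow_f_inv = proj_commute[OF linear_funpow[OF linear_f_inv] funpow_f_inv_mem]

definition "adapted_matrix = (SOME A :: real^'d^'d. invertible A \<and>
    (let N = (\<lambda>x. norm (A *v x)) in
      restr_norm N F S < 1 \<and> restr_conorm N F U > 1 \<and>
      restr_norm N F S < restr_conorm N F C \<and> restr_conorm N F U > restr_norm N F C))"

definition "N x = norm (adapted_matrix *v x)"

definition "norm_S = restr_norm N F S"

definition "norm_C = restr_norm N F C"

definition "conorm_C = restr_conorm N F C"

definition "conorm_U = restr_conorm N F U"

lemma adapted_matrix: "invertible adapted_matrix" "norm_S < conorm_C" "norm_C < conorm_U"
proof -
  have "\<exists>A :: real^'d^'d. invertible A \<and>
      (let N = (\<lambda>x. norm (A *v x)) in
        restr_norm N F S < 1 \<and> restr_conorm N F U > 1 \<and>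
        restr_norm N F S < restr_conorm N F C \<and> restr_conorm N F U > restr_norm N F C)"
    using ph unfolding partially_hyperbolic_def by blast
  then have "invertible adapted_matrix \<and>
      (let N = (\<lambda>x. norm (adapted_matrix *v x)) in
        restr_norm N F S < 1 \<and> restr_conorm N F U > 1 \<and>
        restr_norm N F S < restr_conorm N F C \<and> restr_conorm N F U > restr_norm N F C)"
    unfolding adapted_matrix_def by (rule someI_ex)
  moreover have "(\<lambda>x. norm (adapted_matrix *v x)) = N" by (simp add: fun_eq_iff N_def)
  ultimately have "invertible adapted_matrix \<and> restr_norm N F S < restr_conorm N F C \<and>
      restr_norm N F C < restr_conorm N F U"
    unfolding Let_def by (simp only:)
  then show "invertible adapted_matrix" "norm_S < conorm_C" "norm_C < conorm_U"
    unfolding norm_S_def conorm_C_def norm_C_def conorm_U_def by blast+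
qed

lemma N_equiv:
  obtains a b where "0 < a" "0 < b" "\<And>x. a * norm x \<le> N x" "\<And>x. N x \<le> b * norm x"
proof -
  obtain a where "0 < a" "\<And>x. a * norm x \<le> N x"
    using invertible_norm_lower[OF adapted_matrix(1)] unfolding N_def by blast
  moreover obtain b where "0 < b" "\<And>x. N x \<le> b * norm x"
    using linear_bounded_pos[OF matrix_vector_mul_linear[of adapted_matrix]] unfolding N_def by blast
  ultimately show ?thesis using that by blast
qed

lemma N_nonneg: "0 \<le> N x"
  by (simp add: N_def)

lemma N_step:
  "s \<in> S \<Longrightarrow> N (f s) \<le> norm_S * N s" "c \<in> C \<Longrightarrow> N (f c) \<le> norm_C * N c"
  "c \<in> C \<Longrightarrow> conorm_C * N c \<le> N (f c)" "u \<in> U \<Longrightarrow> conorm_U * N u \<le> N (f u)"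
  unfolding norm_S_def norm_C_def conorm_C_def conorm_U_def f_def N_def[abs_def]
  by (simp_all add: restr_norm_bound restr_conorm_bound adapted_matrix(1))

lemma S_nontrivial: "S \<noteq> {0}"
  using ph unfolding partially_hyperbolic_def by (elim conjE) assumption

lemma C_nontrivial: "C \<noteq> {0}"
  using ph unfolding partially_hyperbolic_def by (elim conjE) assumption

lemma exists_nonzero_mem: "\<exists>s\<in>S. s \<noteq> 0" "\<exists>c\<in>C. c \<noteq> 0"
  using S_nontrivial C_nontrivial subspace_0[OF subspace_S] subspace_0[OF subspace_C] by blast+

lemma norm_S_nonneg: "0 \<le> norm_S" and norm_C_nonneg: "0 \<le> norm_C"
  using exists_nonzero_mem restr_norm_nonneg[OF adapted_matrix(1)]
  unfolding norm_S_def norm_C_def N_def[abs_def] by blast+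

lemma conorm_C_pos: "0 < conorm_C" and conorm_U_pos: "0 < conorm_U"
  using norm_S_nonneg norm_C_nonneg adapted_matrix(2,3) by linarith+

lemma N_funpow_f:
  "s \<in> S \<Longrightarrow> N ((f ^^ k) s) \<le> norm_S ^ k * N s"
  "c \<in> C \<Longrightarrow> N ((f ^^ k) c) \<le> norm_C ^ k * N c"
  "c \<in> C \<Longrightarrow> conorm_C ^ k * N c \<le> N ((f ^^ k) c)"
  "u \<in> U \<Longrightarrow> conorm_U ^ k * N u \<le> N ((f ^^ k) u)"
proof -
  have "0 \<le> conorm_C" "0 \<le> conorm_U" using conorm_C_pos conorm_U_pos by simp_all
  note growth = funpow_growth_upper[where f=f and N=N] funpow_growth_lower[where f=f and N=N]
  show "s \<in> S \<Longrightarrow> N ((f ^^ k) s) \<le> norm_S ^ k * N s"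
    using growth(1)[OF f_mem(1) N_step(1) norm_S_nonneg] .
  show "c \<in> C \<Longrightarrow> N ((f ^^ k) c) \<le> norm_C ^ k * N c"
    using growth(1)[OF f_mem(2) N_step(2) norm_C_nonneg] .
  show "c \<in> C \<Longrightarrow> conorm_C ^ k * N c \<le> N ((f ^^ k) c)"
    using growth(2)[OF f_mem(2) N_step(3) \<open>0 \<le> conorm_C\<close>] .
  show "u \<in> U \<Longrightarrow> conorm_U ^ k * N u \<le> N ((f ^^ k) u)"
    using growth(2)[OF f_mem(3) N_step(4) \<open>0 \<le> conorm_U\<close>] .
qed

definition "g h = transpose F *v h"

definition "g_inv h = transpose (matrix_inv F) *v h"

lemma inner_g: "g h \<bullet> x = h \<bullet> f x" and inner_g_inv: "g_inv h \<bullet> x = h \<bullet> f_inv x"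
  unfolding g_def g_inv_def f_def f_inv_def by (simp_all add: transpose_matrix_vector dot_lmul_matrix)

lemmas inner_funpow_g = funpow_inner_adjoint[OF inner_g]

lemmas inner_funpow_g_inv = funpow_inner_adjoint[OF inner_g_inv]

lemma linear_g: "linear g" and linear_g_inv: "linear g_inv"
proof -
  have "g = (*v) (transpose F)" "g_inv = (*v) (transpose (matrix_inv F))"
    by (simp_all add: fun_eq_iff g_def g_inv_def)
  then show "linear g" "linear g_inv" by (simp_all add: matrix_vector_mul_linear)
qed

lemma g_g_inv: "g (g_inv h) = h"
  by (rule vector_eq_rdot[THEN iffD1]) (simp add: inner_g inner_g_inv f_inv_f)

lemma g_inv_g: "g_inv (g h) = h"
  by (rule vector_eq_rdot[THEN iffD1]) (simp add: inner_g inner_g_inv f_f_inv)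

lemma inj_g: "inj g"
  by (metis g_inv_g injI)

text \<open>The annihilator of \<open>S \<oplus> U\<close> is the dual of \<open>C\<close>; the transpose \<open>g\<close> of \<open>F\<close> acts on it with the
  growth rates of \<open>F\<close> on \<open>C\<close>.\<close>
definition "dual_center = (S \<union> U)\<^sup>\<bottom>"

lemma dual_center_iff: "h \<in> dual_center \<longleftrightarrow> (\<forall>s\<in>S. h \<bullet> s = 0) \<and> (\<forall>u\<in>U. h \<bullet> u = 0)"
  unfolding dual_center_def orthogonal_comp_def orthogonal_def by (auto simp: inner_commute)

lemma inner_dual_center: "h \<in> dual_center \<Longrightarrow> h \<bullet> v = h \<bullet> proj_C v"
proof -
  assume "h \<in> dual_center"
  moreover have "h \<bullet> v = h \<bullet> proj_S v + h \<bullet> proj_C v + h \<bullet> proj_U v"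
    by (metis inner_add_right proj_sum)
  ultimately show ?thesis using proj_mem by (simp add: dual_center_iff)
qed

definition "dual_proj = adjoint proj_C"

lemma inner_dual_proj: "dual_proj h \<bullet> v = h \<bullet> proj_C v"
  unfolding dual_proj_def by (rule adjoint_clauses(2)[OF linear_proj(2)])

lemma linear_dual_proj: "linear dual_proj"
  unfolding dual_proj_def by (rule adjoint_linear[OF linear_proj(2)])

lemma dual_proj_mem: "dual_proj h \<in> dual_center"
  by (simp add: dual_center_iff inner_dual_proj proj_of_S proj_of_U)

lemma dual_proj_id:
  assumes "h \<in> dual_center"
  shows "dual_proj h = h"
proof (rule vector_eq_rdot[THEN iffD1], rule allI)
  fix v
  show "dual_proj h \<bullet> v = h \<bullet> v" by (simp only: inner_dual_proj inner_dual_center[OF assms, of v])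
qed

lemma dual_proj_funpow_g: "dual_proj ((g ^^ k) h) = (g ^^ k) (dual_proj h)"
  by (rule vector_eq_rdot[THEN iffD1]) (simp add: inner_dual_proj inner_funpow_g proj_funpow_f(2))

lemma dual_center_forward_bound:
  obtains \<kappa> where "\<kappa> > 0" "\<And>h k. h \<in> dual_center \<Longrightarrow> norm ((g ^^ k) h) \<le> \<kappa> * norm_C ^ k * norm h"
proof -
  obtain a b where ab: "0 < a" "0 < b" "\<And>x. a * norm x \<le> N x" "\<And>x. N x \<le> b * norm x"
    using N_equiv by blast
  obtain P where P: "P > 0" "\<And>x. norm (proj_C x) \<le> P * norm x"
    using linear_bounded_pos[OF linear_proj(2)] by blast
  have "norm ((g ^^ k) h) \<le> (b * P / a) * norm_C ^ k * norm h" if h: "h \<in> dual_center" for h k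
  proof (rule le_if_mult_self_le)
    define y where "y = (g ^^ k) h"
    define c where "c = proj_C y"
    have "a * norm ((f ^^ k) c) \<le> N ((f ^^ k) c)" by (rule ab(3))
    also have "\<dots> \<le> norm_C ^ k * N c" using N_funpow_f(2) proj_mem(2) unfolding c_def by blast
    also have "\<dots> \<le> norm_C ^ k * (b * (P * norm y))"
      using ab(4)[of c] P(2)[of y] ab(2) norm_C_nonneg unfolding c_def
      by (intro mult_left_mono) (auto intro: order_trans)
    finally have fc: "norm ((f ^^ k) c) \<le> (b * P / a) * norm_C ^ k * norm y"
      using ab(1) by (simp add: field_simps)
    have "norm y * norm y = y \<bullet> y" by (simp add: dot_square_norm power2_eq_square)
    also have "\<dots> = h \<bullet> proj_C ((f ^^ k) y)"
      unfolding y_def inner_funpow_g by (rule inner_dual_center[OF h])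
    also have "\<dots> = h \<bullet> (f ^^ k) c" unfolding c_def by (simp only: proj_funpow_f(2))
    also have "\<dots> \<le> norm h * ((b * P / a) * norm_C ^ k * norm y)"
      using norm_cauchy_schwarz[of h "(f ^^ k) c"] fc by (meson mult_left_mono norm_ge_zero order_trans)
    finally show "norm y * norm y \<le> (b * P / a) * norm_C ^ k * norm h * norm y"
      by (simp add: algebra_simps)
  qed (use ab P norm_C_nonneg in auto)
  then show ?thesis using that[of "b * P / a"] ab P by simp
qed

lemma dual_center_backward_bound:
  obtains \<kappa> where "\<kappa> > 0"
    "\<And>h k. h \<in> dual_center \<Longrightarrow> conorm_C ^ k * norm ((g_inv ^^ k) h) \<le> \<kappa> * norm h"
proof -
  obtain a b where ab: "0 < a" "0 < b" "\<And>x. a * norm x \<le> N x" "\<And>x. N x \<le> b * norm x"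
    using N_equiv by blast
  obtain P where P: "P > 0" "\<And>x. norm (proj_C x) \<le> P * norm x"
    using linear_bounded_pos[OF linear_proj(2)] by blast
  define \<kappa> where "\<kappa> = b * P / a"
  have \<kappa>: "\<kappa> > 0" using ab P by (simp add: \<kappa>_def)
  have "conorm_C ^ k * norm ((g_inv ^^ k) h) \<le> \<kappa> * norm h" if h: "h \<in> dual_center" for h k
  proof -
    define y where "y = (g_inv ^^ k) h"
    define c where "c = proj_C y"
    have "conorm_C ^ k * (a * norm ((f_inv ^^ k) c)) \<le> conorm_C ^ k * N ((f_inv ^^ k) c)"
      using ab(3) conorm_C_pos by (intro mult_left_mono) auto
    also have "\<dots> \<le> N ((f ^^ k) ((f_inv ^^ k) c))"
      using N_funpow_f(3) funpow_f_inv_mem(2) proj_mem(2) unfolding c_def by blast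
    also have "\<dots> = N c" by (simp only: funpow_inverse_cancel[of f f_inv, OF f_f_inv])
    also have "\<dots> \<le> b * (P * norm y)"
      using ab(4)[of c] P(2)[of y] ab(2) unfolding c_def by (meson mult_left_mono less_imp_le order_trans)
    finally have fc: "conorm_C ^ k * norm ((f_inv ^^ k) c) \<le> \<kappa> * norm y"
      using ab(1) by (simp add: \<kappa>_def field_simps)
    have "norm y * norm y = y \<bullet> y" by (simp add: dot_square_norm power2_eq_square)
    also have "\<dots> = h \<bullet> proj_C ((f_inv ^^ k) y)"
      unfolding y_def inner_funpow_g_inv by (rule inner_dual_center[OF h])
    also have "\<dots> = h \<bullet> (f_inv ^^ k) c" unfolding c_def by (simp only: proj_funpow_f_inv(2))
    also have "\<dots> \<le> norm h * norm ((f_inv ^^ k) c)" by (rule norm_cauchy_schwarz)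
    finally have "conorm_C ^ k * norm y * norm y \<le> norm h * (conorm_C ^ k * norm ((f_inv ^^ k) c))"
      using conorm_C_pos by (simp add: mult_left_mono mult.assoc mult.left_commute)
    also have "\<dots> \<le> norm h * (\<kappa> * norm y)"
      by (rule mult_left_mono[OF fc norm_ge_zero])
    finally have le: "(conorm_C ^ k * norm y) * norm y \<le> (\<kappa> * norm h) * norm y"
      by (simp add: algebra_simps)
    show ?thesis
    proof (cases "norm y = 0")
      case True
      then show ?thesis using \<kappa> by (simp add: y_def)
    next
      case False
      then show ?thesis using mult_right_le_imp_le[OF le] by (simp add: y_def)
    qed
  qed
  then show ?thesis using that \<kappa> by blast
qed

lemma stable_zero_if_slow:
  assumes "s \<in> S" "\<And>j. conorm_C ^ j * norm ((f_inv ^^ j) s) \<le> K"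
  shows "s = 0"
proof -
  obtain a b where ab: "0 < a" "0 < b" "\<And>x. a * norm x \<le> N x" "\<And>x. N x \<le> b * norm x"
    using N_equiv by blast
  have "conorm_C ^ j * N s \<le> (b * K) * norm_S ^ j" for j
  proof -
    have "N s = N ((f ^^ j) ((f_inv ^^ j) s))"
      by (simp only: funpow_inverse_cancel[of f f_inv, OF f_f_inv])
    also have "\<dots> \<le> norm_S ^ j * N ((f_inv ^^ j) s)"
      using N_funpow_f(1) funpow_f_inv_mem(1)[OF assms(1)] by blast
    also have "\<dots> \<le> norm_S ^ j * (b * norm ((f_inv ^^ j) s))"
      using ab(4) norm_S_nonneg by (intro mult_left_mono) auto
    finally have "conorm_C ^ j * N s \<le> conorm_C ^ j * (norm_S ^ j * (b * norm ((f_inv ^^ j) s)))"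
      using conorm_C_pos by (intro mult_left_mono) auto
    also have "\<dots> = (b * norm_S ^ j) * (conorm_C ^ j * norm ((f_inv ^^ j) s))"
      by (simp add: algebra_simps)
    also have "\<dots> \<le> (b * norm_S ^ j) * K"
      using assms(2) ab(2) norm_S_nonneg by (intro mult_left_mono) auto
    finally show ?thesis by (simp add: algebra_simps)
  qed
  then have "N s \<le> 0" by (rule nonpos_if_geometrically_dominated[OF norm_S_nonneg adapted_matrix(2)])
  then have "a * norm s \<le> 0" using ab(3) order_trans by blast
  then show "s = 0" using ab(1) by (simp add: mult_le_0_iff)
qed

lemma unstable_zero_if_slow:
  assumes "u \<in> U" "\<And>j. norm ((f ^^ j) u) \<le> K * norm_C ^ j"
  shows "u = 0"
proof -
  obtain a b where ab: "0 < a" "0 < b" "\<And>x. a * norm x \<le> N x" "\<And>x. N x \<le> b * norm x"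
    using N_equiv by blast
  have "conorm_U ^ j * N u \<le> (b * K) * norm_C ^ j" for j
  proof -
    have "conorm_U ^ j * N u \<le> N ((f ^^ j) u)" using N_funpow_f(4)[OF assms(1)] .
    also have "\<dots> \<le> b * norm ((f ^^ j) u)" by (rule ab(4))
    also have "\<dots> \<le> b * (K * norm_C ^ j)" using assms(2) ab(2) by (intro mult_left_mono) auto
    finally show ?thesis by (simp add: algebra_simps)
  qed
  then have "N u \<le> 0" by (rule nonpos_if_geometrically_dominated[OF norm_C_nonneg adapted_matrix(3)])
  then have "a * norm u \<le> 0" using ab(3) order_trans by blast
  then show "u = 0" using ab(1) by (simp add: mult_le_0_iff)
qed

lemma orthogonal_unstable_if_slow:
  assumes "\<And>j. norm ((g ^^ j) n) \<le> K * norm_C ^ j" "u \<in> U"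
  shows "n \<bullet> u = 0"
proof -
  obtain a b where ab: "0 < a" "0 < b" "\<And>x. a * norm x \<le> N x" "\<And>x. N x \<le> b * norm x"
    using N_equiv by blast
  have "conorm_U ^ j * (a * \<bar>n \<bullet> u\<bar>) \<le> (K * N u) * norm_C ^ j" for j
  proof -
    have "n \<bullet> u = (g ^^ j) n \<bullet> (f_inv ^^ j) u"
      by (simp only: inner_funpow_g funpow_inverse_cancel[of f f_inv, OF f_f_inv])
    then have "conorm_U ^ j * (a * \<bar>n \<bullet> u\<bar>) \<le>
        conorm_U ^ j * (a * (norm ((g ^^ j) n) * norm ((f_inv ^^ j) u)))"
      using conorm_U_pos ab(1) by (intro mult_left_mono) (auto simp: Cauchy_Schwarz_ineq2)
    also have "\<dots> = norm ((g ^^ j) n) * (conorm_U ^ j * (a * norm ((f_inv ^^ j) u)))"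
      by (simp add: algebra_simps)
    also have "\<dots> \<le> norm ((g ^^ j) n) * N u"
    proof (rule mult_left_mono)
      have "conorm_U ^ j * (a * norm ((f_inv ^^ j) u)) \<le> conorm_U ^ j * N ((f_inv ^^ j) u)"
        using ab(3) conorm_U_pos by (intro mult_left_mono) auto
      also have "\<dots> \<le> N ((f ^^ j) ((f_inv ^^ j) u))"
        using N_funpow_f(4) funpow_f_inv_mem(3)[OF assms(2)] by blast
      finally show "conorm_U ^ j * (a * norm ((f_inv ^^ j) u)) \<le> N u"
        by (simp only: funpow_inverse_cancel[of f f_inv, OF f_f_inv])
    qed simp
    also have "\<dots> \<le> (K * norm_C ^ j) * N u"
      using assms(1) N_nonneg by (rule mult_right_mono)
    finally show ?thesis by (simp add: algebra_simps)
  qed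
  then have "a * \<bar>n \<bullet> u\<bar> \<le> 0"
    by (rule nonpos_if_geometrically_dominated[OF norm_C_nonneg adapted_matrix(3)])
  then show ?thesis using ab(1) by (simp add: mult_le_0_iff)
qed

lemma orthogonal_stable_if_slow:
  assumes "\<And>j. conorm_C ^ j * norm ((g_inv ^^ j) n) \<le> K" "s \<in> S"
  shows "n \<bullet> s = 0"
proof -
  obtain a b where ab: "0 < a" "0 < b" "\<And>x. a * norm x \<le> N x" "\<And>x. N x \<le> b * norm x"
    using N_equiv by blast
  have "norm n \<le> K" using assms(1)[of 0] by simp
  then have K0: "0 \<le> K" using norm_ge_zero order_trans by blast
  have "conorm_C ^ j * (a * \<bar>n \<bullet> s\<bar>) \<le> (K * N s) * norm_S ^ j" for j
  proof -
    have "n \<bullet> s = (g_inv ^^ j) n \<bullet> (f ^^ j) s"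
      by (simp only: inner_funpow_g_inv funpow_inverse_cancel[of f_inv f, OF f_inv_f])
    then have "conorm_C ^ j * (a * \<bar>n \<bullet> s\<bar>) \<le>
        conorm_C ^ j * (a * (norm ((g_inv ^^ j) n) * norm ((f ^^ j) s)))"
      using conorm_C_pos ab(1) by (intro mult_left_mono) (auto simp: Cauchy_Schwarz_ineq2)
    also have "\<dots> = (conorm_C ^ j * norm ((g_inv ^^ j) n)) * (a * norm ((f ^^ j) s))"
      by (simp add: algebra_simps)
    also have "\<dots> \<le> K * (norm_S ^ j * N s)"
    proof (rule mult_mono)
      show "a * norm ((f ^^ j) s) \<le> norm_S ^ j * N s"
        using ab(3) N_funpow_f(1)[OF assms(2)] order_trans by blast
    qed (use assms(1) K0 ab(1) in auto)
    finally show ?thesis by (simp add: algebra_simps)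
  qed
  then have "a * \<bar>n \<bullet> s\<bar> \<le> 0"
    by (rule nonpos_if_geometrically_dominated[OF norm_S_nonneg adapted_matrix(2)])
  then show ?thesis using ab(1) by (simp add: mult_le_0_iff)
qed

text \<open>An orbit satisfying the minimal relation of the orbit of some \<open>h\<close> in the dual center is a linear
  image of it, so it grows at most at the rates of \<open>F\<close> on \<open>C\<close>.\<close>
lemma shared_relation_forward_bound:
  fixes B :: "real^'d \<Rightarrow> real^'d"
  assumes h: "h \<in> dual_center" and rel: "minimal_relation g h m b"
    and B: "linear B" and rel_y: "(\<Sum>k\<le>m. b k *\<^sub>R (B ^^ k) y) = 0"
  obtains K where "\<And>j. norm ((B ^^ j) y) \<le> K * norm_C ^ j"
proof -
  obtain K where K: "K > 0" "\<And>j. norm ((B ^^ j) y) \<le> K * norm ((g ^^ j) h)"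
    using minimal_relation_dominates[OF linear_g B rel rel_y] by blast
  obtain \<kappa> where "\<kappa> > 0"
    and \<kappa>: "\<And>h k. h \<in> dual_center \<Longrightarrow> norm ((g ^^ k) h) \<le> \<kappa> * norm_C ^ k * norm h"
    using dual_center_forward_bound by blast
  show ?thesis
  proof (rule that)
    show "norm ((B ^^ j) y) \<le> (K * \<kappa> * norm h) * norm_C ^ j" for j
      using order_trans[OF K(2) mult_left_mono[OF \<kappa>[OF h] less_imp_le[OF K(1)]]]
      by (simp add: algebra_simps)
  qed
qed

lemma shared_relation_backward_bound:
  fixes B B_inv :: "real^'d \<Rightarrow> real^'d"
  assumes h: "h \<in> dual_center" and rel: "minimal_relation g h m b"
    and B_inv: "linear B_inv" "\<And>x. B_inv (B x) = x" and rel_y: "(\<Sum>k\<le>m. b k *\<^sub>R (B ^^ k) y) = 0"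
  obtains K where "\<And>j. conorm_C ^ j * norm ((B_inv ^^ j) y) \<le> K"
proof -
  have "b 0 \<noteq> 0" by (rule minimal_relation_lowest_coeff[OF linear_g inj_g rel])
  then have rel': "minimal_relation g_inv h m (\<lambda>k. b (m - k))"
    by (rule minimal_relation_reverse[OF linear_g linear_g_inv g_inv_g g_g_inv rel])
  have rel_y': "(\<Sum>k\<le>m. b (m - k) *\<^sub>R (B_inv ^^ k) y) = 0"
    by (rule orbit_relation_reverse[OF B_inv rel_y])
  obtain K where K: "K > 0" "\<And>j. norm ((B_inv ^^ j) y) \<le> K * norm ((g_inv ^^ j) h)"
    using minimal_relation_dominates[OF linear_g_inv B_inv(1) rel' rel_y'] by blast
  obtain \<kappa> where "\<kappa> > 0"
    and \<kappa>: "\<And>h k. h \<in> dual_center \<Longrightarrow> conorm_C ^ k * norm ((g_inv ^^ k) h) \<le> \<kappa> * norm h"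
    using dual_center_backward_bound by blast
  show ?thesis
  proof (rule that)
    fix j
    have "conorm_C ^ j * norm ((B_inv ^^ j) y) \<le> conorm_C ^ j * (K * norm ((g_inv ^^ j) h))"
      using K(2) conorm_C_pos by (intro mult_left_mono) auto
    also have "\<dots> = K * (conorm_C ^ j * norm ((g_inv ^^ j) h))" by (simp add: algebra_simps)
    also have "\<dots> \<le> K * (\<kappa> * norm h)" using \<kappa>[OF h] K(1) by (intro mult_left_mono) auto
    finally show "conorm_C ^ j * norm ((B_inv ^^ j) y) \<le> K * (\<kappa> * norm h)" .
  qed
qed

lemma stable_vector_annihilated:
  assumes "h \<in> dual_center" "minimal_relation g h m b"
    and s: "s \<in> S" and rel_s: "(\<Sum>k\<le>m. b k *\<^sub>R (f ^^ k) s) = 0"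
  shows "s = 0"
proof -
  obtain K where "\<And>j. conorm_C ^ j * norm ((f_inv ^^ j) s) \<le> K"
    using shared_relation_backward_bound[OF assms(1,2) linear_f_inv f_inv_f rel_s] by blast
  then show ?thesis by (rule stable_zero_if_slow[OF s])
qed

lemma unstable_vector_annihilated:
  assumes "h \<in> dual_center" "minimal_relation g h m b"
    and u: "u \<in> U" and rel_u: "(\<Sum>k\<le>m. b k *\<^sub>R (f ^^ k) u) = 0"
  shows "u = 0"
proof -
  obtain K where "\<And>j. norm ((f ^^ j) u) \<le> K * norm_C ^ j"
    using shared_relation_forward_bound[OF assms(1,2) linear_f rel_u] by blast
  then show ?thesis by (rule unstable_zero_if_slow[OF u])
qed

lemma dim_dual_center_le:
  fixes b :: "'c::finite \<Rightarrow> real^'d"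
  assumes span_b: "span (range b) = C"
  shows "dim dual_center \<le> CARD('c)"
proof -
  define L where "L h = (\<chi> j. h \<bullet> b j)" for h
  have lin: "linear L" by (rule linearI) (simp_all add: L_def vec_eq_iff inner_add_left)
  have sub: "subspace dual_center" unfolding dual_center_def by (rule subspace_orthogonal_comp)
  have zero: "h = 0" if "h \<in> dual_center" "L h = 0" for h
  proof -
    have "range b \<subseteq> {x. h \<bullet> x = 0}" using that(2) by (auto simp: L_def vec_eq_iff)
    then have "C \<subseteq> {x. h \<bullet> x = 0}"
      unfolding span_b[symmetric] by (rule span_minimal) (auto simp: subspace_def inner_add_right)
    then have "h \<bullet> h = 0" using inner_dual_center[OF that(1), of h] proj_mem(2) by auto
    then show ?thesis by simp
  qed
  have span_eq: "span dual_center = dual_center" using sub by (simp add: span_eq_iff)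
  have "inj_on L (span dual_center)"
  proof (rule inj_onI)
    fix x y assume "x \<in> span dual_center" "y \<in> span dual_center" "L x = L y"
    then have "x - y \<in> dual_center" "L (x - y) = 0"
      using sub lin unfolding span_eq by (auto simp: linear_diff subspace_diff)
    then have "x - y = 0" by (rule zero)
    then show "x = y" by simp
  qed
  then have "dim (L ` dual_center) = dim dual_center" by (rule dim_image_eq[OF lin])
  moreover have "dim (L ` dual_center) \<le> CARD('c)" using dim_subset_UNIV[of "L ` dual_center"] by simp
  ultimately show ?thesis by simp
qed

lemma coordinate_vector_in_dual_center:
  fixes P :: "real^'d \<Rightarrow> real^'c"
  assumes lin: "linear P" and P_proj: "\<And>v. P v = P (cproj S C U v)"
  shows "(\<chi> i. P (axis i 1) \<bullet> q) \<in> dual_center"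
proof -
  have inner: "(\<chi> i. P (axis i 1) \<bullet> q) \<bullet> v = P v \<bullet> q" for v
  proof -
    have "P v = P (\<Sum>i\<in>UNIV. v $ i *\<^sub>R axis i 1)"
      using basis_expansion[of v] by (simp add: scalar_mult_eq_scaleR)
    also have "\<dots> = (\<Sum>i\<in>UNIV. v $ i *\<^sub>R P (axis i 1))"
      using lin by (simp add: linear_sum linear_scale)
    finally have "P v \<bullet> q = (\<Sum>i\<in>UNIV. v $ i * (P (axis i 1) \<bullet> q))"
      by (simp add: inner_sum_left)
    moreover have "(\<chi> i. P (axis i 1) \<bullet> q) \<bullet> v = (\<Sum>i\<in>UNIV. (P (axis i 1) \<bullet> q) * v $ i)"
      by (simp only: inner_vec_def vec_lambda_beta inner_real_def)
    ultimately show ?thesis by (simp add: mult.commute)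
  qed
  have vanish: "P x = 0" if "proj_C x = 0" for x
    using P_proj[of x] linear_0[OF lin] that by (simp add: cproj_eq_proj_C)
  show ?thesis
    unfolding dual_center_iff inner using vanish proj_of_S proj_of_U by simp
qed

end

section \<open>Toral automorphisms\<close>

locale toral_partially_hyperbolic = partially_hyperbolic_map F S C U
  for F :: "real^'d^'d" and S C U +
  assumes SL: "SL_int F" and irreducible: "C \<inter> int_lattice = {0}"
begin

lemma int_lattice_g: "n \<in> int_lattice \<Longrightarrow> g n \<in> int_lattice"
  using SL unfolding int_lattice_def g_def SL_int_def
  by (auto simp: matrix_vector_mult_def transpose_def intro!: Ints_sum Ints_mult)

lemma int_lattice_f: "n \<in> int_lattice \<Longrightarrow> f n \<in> int_lattice"
  using SL unfolding int_lattice_def f_def SL_int_def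
  by (auto simp: matrix_vector_mult_def intro!: Ints_sum Ints_mult)

lemma int_lattice_funpow_g: "n \<in> int_lattice \<Longrightarrow> (g ^^ k) n \<in> int_lattice"
  by (induction k) (simp_all add: int_lattice_g)

lemma int_lattice_funpow_f: "n \<in> int_lattice \<Longrightarrow> (f ^^ k) n \<in> int_lattice"
  by (induction k) (simp_all add: int_lattice_f)

lemma integer_minimal_relation:
  assumes "n \<in> int_lattice" "n \<noteq> 0"
  obtains m b where "0 < m" "m \<le> CARD('d)" "\<And>k. k \<le> m \<Longrightarrow> b k \<in> \<int>" "minimal_relation g n m b"
proof -
  obtain m c where m: "0 < m" "m \<le> DIM(real^'d)" and rel: "minimal_relation g n m c"
    using minimal_relation_exists[where A=g, OF assms(2)] by blast
  have orbit: "(g ^^ k) n \<in> int_lattice" if "k \<in> {..m}" for k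
    using int_lattice_funpow_g[OF assms(1)] .
  have sum: "(\<Sum>k\<in>{..m}. c k *\<^sub>R (g ^^ k) n) = 0" and cm: "c m \<noteq> 0"
    using rel by (simp_all add: minimal_relation_def)
  obtain b where b: "\<And>k. k \<in> {..m} \<Longrightarrow> b k \<in> \<int>" "(\<Sum>k\<in>{..m}. b k *\<^sub>R (g ^^ k) n) = 0" "b m \<noteq> 0"
    using integer_relation_from_real_relation[OF finite_atMost orbit sum atMost_iff[THEN iffD2, OF order_refl] cm]
    by blast
  have rel_b: "minimal_relation g n m b" using rel b(2,3) by (simp add: minimal_relation_def)
  show ?thesis
  proof (rule that[OF m(1) _ _ rel_b])
    show "m \<le> CARD('d)" using m(2) by simp
    show "b k \<in> \<int>" if "k \<le> m" for k using b(1) that by simp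
  qed
qed

text \<open>With \<open>p\<close> the minimal polynomial of \<open>n\<close> under \<open>g\<close>, the vector \<open>n\<close> annihilates the image of the
  integer matrix \<open>p(F)\<close>, which therefore has an integer kernel vector; its components in \<open>S\<close> and \<open>U\<close>
  vanish, contradicting \<open>C \<inter> \<int>\<^sup>d = {0}\<close>.\<close>
lemma dual_center_int_lattice:
  assumes n: "n \<in> int_lattice" "n \<in> dual_center"
  shows "n = 0"
proof (rule ccontr)
  assume "n \<noteq> 0"
  obtain m b where "0 < m" "m \<le> CARD('d)" and b_int: "\<And>k. k \<le> m \<Longrightarrow> b k \<in> \<int>"
    and rel: "minimal_relation g n m b"
    using integer_minimal_relation[OF n(1) \<open>n \<noteq> 0\<close>] by blast
  define \<mu> where "\<mu> x = (\<Sum>k\<le>m. b k *\<^sub>R (f ^^ k) x)" for x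
  have lin: "linear \<mu>" unfolding \<mu>_def by (rule linear_orbit_sum[OF linear_f])
  have annihilates: "n \<bullet> \<mu> x = 0" for x
  proof -
    have "n \<bullet> \<mu> x = (\<Sum>k\<le>m. b k *\<^sub>R (g ^^ k) n) \<bullet> x"
      by (simp add: \<mu>_def inner_sum_left inner_sum_right inner_funpow_g)
    then show ?thesis using rel by (simp add: minimal_relation_def)
  qed
  have "\<not> surj \<mu>"
  proof
    assume "surj \<mu>"
    then obtain y where "\<mu> y = n" by (metis surjD)
    then show False using annihilates[of y] \<open>n \<noteq> 0\<close> by simp
  qed
  then have "\<not> inj \<mu>" using linear_injective_imp_surjective[OF lin] by blast
  then obtain x where x: "\<mu> x = 0" "x \<noteq> 0" using linear_injective_0[OF lin] by blast
  have \<mu>_int: "\<mu> (axis i 1) \<in> int_lattice" for i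
    unfolding \<mu>_def using b_int int_lattice_funpow_f[OF axis_in_int_lattice]
    by (intro int_lattice_sum) auto
  obtain z where z: "z \<in> int_lattice" "z \<noteq> 0" "\<mu> z = 0"
    using integer_kernel_vector[OF lin \<mu>_int x] by blast
  have "\<mu> (proj_S z) = proj_S (\<mu> z)" "\<mu> (proj_U z) = proj_U (\<mu> z)"
    unfolding \<mu>_def using linear_proj(1,3)
    by (simp_all add: linear_sum linear_scale proj_funpow_f(1,3))
  then have "\<mu> (proj_S z) = 0" "\<mu> (proj_U z) = 0"
    using z(3) linear_0[OF linear_proj(1)] linear_0[OF linear_proj(3)] by simp_all
  then have "proj_S z = 0" "proj_U z = 0"
    using stable_vector_annihilated[OF n(2) rel proj_mem(1)]
      unstable_vector_annihilated[OF n(2) rel proj_mem(3)]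
    unfolding \<mu>_def by blast+
  then have "z \<in> C" using proj_sum[of z] proj_mem(2)[of z] by simp
  then show False using irreducible z(1,2) by blast
qed

text \<open>Otherwise the orbit of \<open>n\<close> would be a linear image of the orbit of \<open>dual_proj n\<close>, forcing \<open>n\<close>
  to annihilate \<open>S\<close> and \<open>U\<close>.\<close>
lemma projected_orbit_dependent:
  assumes n: "n \<in> int_lattice" "n \<noteq> 0" and rel: "minimal_relation g n m b"
  shows "\<not> independent_family (\<lambda>k. dual_proj ((g ^^ k) n)) {..<m}"
proof
  assume ind: "independent_family (\<lambda>k. dual_proj ((g ^^ k) n)) {..<m}"
  define h where "h = dual_proj n"
  have h: "h \<in> dual_center" by (simp add: h_def dual_proj_mem)
  have rel_n: "(\<Sum>k\<le>m. b k *\<^sub>R (g ^^ k) n) = 0" using rel by (simp add: minimal_relation_def)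
  have "(\<Sum>k\<le>m. b k *\<^sub>R (g ^^ k) h) = dual_proj (\<Sum>k\<le>m. b k *\<^sub>R (g ^^ k) n)"
    unfolding h_def using linear_dual_proj by (simp add: linear_sum linear_scale dual_proj_funpow_g)
  then have rel_h: "minimal_relation g h m b"
    using rel ind linear_0[OF linear_dual_proj] rel_n
    by (simp add: minimal_relation_def h_def dual_proj_funpow_g)
  have "n \<bullet> u = 0" if "u \<in> U" for u
  proof -
    obtain K where "\<And>j. norm ((g ^^ j) n) \<le> K * norm_C ^ j"
      using shared_relation_forward_bound[OF h rel_h linear_g rel_n] by blast
    then show ?thesis using orthogonal_unstable_if_slow that by blast
  qed
  moreover have "n \<bullet> s = 0" if "s \<in> S" for s
  proof -
    obtain K where "\<And>j. conorm_C ^ j * norm ((g_inv ^^ j) n) \<le> K"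
      using shared_relation_backward_bound[OF h rel_h linear_g_inv g_inv_g rel_n] by blast
    then show ?thesis using orthogonal_stable_if_slow that by blast
  qed
  ultimately have "n \<in> dual_center" by (simp add: dual_center_iff)
  then show False using dual_center_int_lattice n by blast
qed

lemma integer_orbit_det_bound:
  assumes n: "n \<in> int_lattice" "n \<noteq> 0"
    and B: "1 \<le> B" "\<And>x. norm (g x) \<le> B * norm x" "\<And>x. norm (dual_proj x) \<le> B * norm x"
    and small: "B ^ CARD('d) * norm (n - dual_proj n) \<le> 1"
  shows "1 \<le> 2 ^ CARD('d) * fact CARD('d) *
    (B ^ CARD('d) * norm (n - dual_proj n) * (B ^ Suc CARD('d) * norm n) ^ dim dual_center)"
proof -
  obtain m b where "0 < m" and m: "m \<le> CARD('d)" and "\<And>k. k \<le> m \<Longrightarrow> b k \<in> \<int>"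
    and rel: "minimal_relation g n m b"
    using integer_minimal_relation[OF n] by blast
  have g_pow: "norm ((g ^^ k) x) \<le> B ^ CARD('d) * norm x" if "k < m" for k x
    using norm_funpow_le[OF B(2,1)] that m by simp
  show ?thesis
  proof (rule integer_family_near_subspace)
    show "independent_family (\<lambda>k. (g ^^ k) n) {..<m}" using rel by (simp add: minimal_relation_def)
    show "\<not> independent_family (\<lambda>k. dual_proj ((g ^^ k) n)) {..<m}"
      by (rule projected_orbit_dependent[OF n rel])
    show "(g ^^ k) n \<in> int_lattice" for k by (rule int_lattice_funpow_g[OF n(1)])
    show "dual_proj ((g ^^ k) n) \<in> dual_center" for k by (rule dual_proj_mem)
    show "norm (dual_proj ((g ^^ k) n)) \<le> B ^ Suc CARD('d) * norm n" if "k \<in> {..<m}" for k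
    proof -
      have "norm ((g ^^ k) (dual_proj n)) \<le> B ^ CARD('d) * norm (dual_proj n)" using g_pow that by simp
      also have "\<dots> \<le> B ^ CARD('d) * (B * norm n)" using B(1,3) by (intro mult_left_mono) simp_all
      finally show ?thesis by (simp add: dual_proj_funpow_g algebra_simps)
    qed
    show "norm ((g ^^ k) n - dual_proj ((g ^^ k) n)) \<le> B ^ CARD('d) * norm (n - dual_proj n)"
      if "k \<in> {..<m}" for k
      using g_pow[of k "n - dual_proj n"] that linear_funpow[OF linear_g]
      by (simp add: dual_proj_funpow_g linear_diff)
    have "1 * 1 \<le> B ^ Suc CARD('d) * norm n"
      by (rule mult_mono[OF one_le_power[OF B(1)] int_lattice_norm_ge_1[OF n]]) (use B(1) in simp_all)
    then show "1 \<le> B ^ Suc CARD('d) * norm n" by simp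
  qed (use B(1) small in simp_all)
qed

lemma integer_vector_far_from_dual_center:
  obtains \<kappa> where "\<kappa> > 0"
    "\<And>n :: real^'d. n \<in> int_lattice \<Longrightarrow> n \<noteq> 0 \<Longrightarrow>
      \<kappa> \<le> norm (n - dual_proj n) * norm n ^ dim dual_center"
proof -
  obtain Bg where "Bg > 0" and Bg: "\<And>x. norm (g x) \<le> Bg * norm x"
    using linear_bounded_pos[OF linear_g] by blast
  obtain Bq where "Bq > 0" and Bq: "\<And>x. norm (dual_proj x) \<le> Bq * norm x"
    using linear_bounded_pos[OF linear_dual_proj] by blast
  define B where "B = max 1 (max Bg Bq)"
  have "Bg \<le> B" "Bq \<le> B" by (simp_all add: B_def)
  then have B: "1 \<le> B" "\<And>x. norm (g x) \<le> B * norm x" "\<And>x. norm (dual_proj x) \<le> B * norm x"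
    using order_trans[OF Bg mult_right_mono] order_trans[OF Bq mult_right_mono]
    by (auto simp: B_def)
  define e where "e = dim dual_center"
  define D where "D = 2 ^ CARD('d) * fact CARD('d) * (B ^ Suc CARD('d)) ^ e"
  have D1: "1 \<le> D"
    unfolding D_def using B(1) by (intro one_le_mult_real one_le_power) (simp_all add: fact_ge_1)
  have BD: "B ^ CARD('d) \<le> B ^ CARD('d) * D"
    using D1 B(1) by simp
  show ?thesis
  proof (rule that[of "1 / (B ^ CARD('d) * D)"])
    show "0 < 1 / (B ^ CARD('d) * D)" using B(1) D1 by simp
    fix n :: "real^'d" assume n: "n \<in> int_lattice" "n \<noteq> 0"
    define \<delta> where "\<delta> = norm (n - dual_proj n)"
    have n_pow: "1 \<le> norm n ^ e" using int_lattice_norm_ge_1[OF n] by simp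
    show "1 / (B ^ CARD('d) * D) \<le> norm (n - dual_proj n) * norm n ^ dim dual_center"
    proof (cases "B ^ CARD('d) * \<delta> \<le> 1")
      case True
      have "1 \<le> 2 ^ CARD('d) * fact CARD('d) *
          (B ^ CARD('d) * \<delta> * (B ^ Suc CARD('d) * norm n) ^ e)"
        using integer_orbit_det_bound[OF n B] True unfolding \<delta>_def e_def by blast
      also have "\<dots> = (B ^ CARD('d) * D) * (\<delta> * norm n ^ e)"
        by (simp add: D_def power_mult_distrib algebra_simps)
      finally show ?thesis using B(1) D1 by (simp add: \<delta>_def e_def field_simps)
    next
      case False
      have "1 / (B ^ CARD('d) * D) \<le> 1 / B ^ CARD('d)"
        using B(1) BD by (intro divide_left_mono) auto
      also have "\<dots> \<le> \<delta>" using False B(1) by (simp add: field_simps)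
      also have "\<dots> \<le> \<delta> * norm n ^ e" using mult_left_mono[OF n_pow, of \<delta>] by (simp add: \<delta>_def)
      finally show ?thesis by (simp add: \<delta>_def e_def)
    qed
  qed
qed

lemma dual_center_far_from_lattice:
  obtains K where "K > 0" "\<And>(w :: real^'d) n. w \<in> dual_center \<Longrightarrow> n \<in> int_lattice \<Longrightarrow> n \<noteq> 0 \<Longrightarrow>
    K \<le> norm (n - w) * (norm w + 1) ^ dim dual_center"
proof -
  obtain \<kappa> where \<kappa>: "\<kappa> > 0"
    "\<And>n :: real^'d. n \<in> int_lattice \<Longrightarrow> n \<noteq> 0 \<Longrightarrow>
      \<kappa> \<le> norm (n - dual_proj n) * norm n ^ dim dual_center"
    using integer_vector_far_from_dual_center by blast
  obtain Bq where Bq: "Bq > 0" "\<And>x. norm (dual_proj x) \<le> Bq * norm x"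
    using linear_bounded_pos[OF linear_dual_proj] by blast
  define K where "K = min 1 (\<kappa> / (1 + Bq))"
  show ?thesis
  proof (rule that[of K])
    show "K > 0" using \<kappa>(1) Bq(1) by (simp add: K_def)
    fix w n :: "real^'d" assume w: "w \<in> dual_center" and n: "n \<in> int_lattice" "n \<noteq> 0"
    have w_pow: "1 \<le> (norm w + 1) ^ dim dual_center" by simp
    show "K \<le> norm (n - w) * (norm w + 1) ^ dim dual_center"
    proof (cases "1 \<le> norm (n - w)")
      case True
      have "K \<le> 1" by (simp add: K_def)
      also have "\<dots> \<le> norm (n - w) * (norm w + 1) ^ dim dual_center"
        using True w_pow by (rule one_le_mult_real)
      finally show ?thesis .
    next
      case False
      have "n - dual_proj n = (n - w) - dual_proj (n - w)"
        using dual_proj_id[OF w] linear_diff[OF linear_dual_proj, of n w] by simp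
      then have \<delta>: "norm (n - dual_proj n) \<le> (1 + Bq) * norm (n - w)"
        using norm_triangle_ineq4[of "n - w" "dual_proj (n - w)"] Bq(2)[of "n - w"]
        by (simp add: algebra_simps)
      have "norm n \<le> norm w + 1" using False norm_triangle_ineq[of w "n - w"] by simp
      then have pow: "norm n ^ dim dual_center \<le> (norm w + 1) ^ dim dual_center"
        by (rule power_mono) simp
      have "\<kappa> \<le> norm (n - dual_proj n) * norm n ^ dim dual_center" by (rule \<kappa>(2)[OF n])
      also have "\<dots> \<le> ((1 + Bq) * norm (n - w)) * (norm w + 1) ^ dim dual_center"
        by (rule mult_mono[OF \<delta> pow]) (use Bq(1) in simp_all)
      finally have "\<kappa> / (1 + Bq) \<le> norm (n - w) * (norm w + 1) ^ dim dual_center"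
        using Bq(1) by (simp add: field_simps)
      then show ?thesis by (simp add: K_def min.coboundedI2)
    qed
  qed
qed

end

lemma coordinates_badly_approximable:
  fixes w :: "real^'c \<Rightarrow> real^'d" and \<iota> :: "'c \<Rightarrow> 'd"
  assumes lin: "linear w" and coord: "\<And>q j. w q $ \<iota> j = q $ j" and e: "e \<le> CARD('c)"
    and K0: "K0 > 0"
    and far: "\<And>q n. n \<in> int_lattice \<Longrightarrow> n \<noteq> 0 \<Longrightarrow> K0 \<le> norm (n - w q) * (norm (w q) + 1) ^ e"
  shows "\<exists>K>0. \<forall>q. q \<in> int_lattice \<and> q \<noteq> 0 \<longrightarrow>
    (\<exists>i. \<forall>p\<in>\<int>. \<bar>w q $ i - p\<bar> > K / norm q ^ CARD('c))"
proof -
  obtain Bw where Bw: "Bw > 0" "\<And>q. norm (w q) \<le> Bw * norm q"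
    using linear_bounded_pos[OF lin] by blast
  have "K0 \<le> norm (axis undefined 1 - w 0) * (norm (w 0) + 1) ^ e"
    by (rule far) (simp_all add: axis_in_int_lattice axis_eq_0_iff)
  then have K0_1: "K0 \<le> 1" using linear_0[OF lin] by (simp add: norm_axis_1)
  define D where "D = real CARD('d) * (Bw + 1) ^ CARD('c)"
  have D1: "1 \<le> D" unfolding D_def using Bw(1) by (intro one_le_mult_real) auto
  define K where "K = K0 / (2 * D)"
  have K: "0 < K" "K \<le> 1 / 2" using K0 K0_1 D1 by (auto simp: K_def field_simps)
  show ?thesis
  proof (intro exI[of _ K] conjI allI impI)
    show "0 < K" by (rule K(1))
    fix q :: "real^'c" assume q: "q \<in> int_lattice \<and> q \<noteq> 0"
    have nq: "1 \<le> norm q" using q int_lattice_norm_ge_1 by blast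
    define \<epsilon> where "\<epsilon> = K / norm q ^ CARD('c)"
    have nq_pow: "1 \<le> norm q ^ CARD('c)" using nq by simp
    have "\<epsilon> \<le> K / 1" unfolding \<epsilon>_def using K(1) nq_pow by (intro divide_left_mono) auto
    then have \<epsilon>: "0 < \<epsilon>" "\<epsilon> \<le> K" "\<epsilon> * norm q ^ CARD('c) = K"
      using K(1) nq_pow q by (simp_all add: \<epsilon>_def)
    show "\<exists>i. \<forall>p\<in>\<int>. \<bar>w q $ i - p\<bar> > \<epsilon>"
    proof (rule ccontr)
      assume "\<not> (\<exists>i. \<forall>p\<in>\<int>. \<bar>w q $ i - p\<bar> > \<epsilon>)"
      then have "\<forall>i. \<exists>p\<in>\<int>. \<bar>w q $ i - p\<bar> \<le> \<epsilon>" by (auto simp: not_less)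
      then obtain n where n_int: "n \<in> int_lattice" and n: "\<And>i. \<bar>w q $ i - n $ i\<bar> \<le> \<epsilon>"
        and near: "norm (n - w q) \<le> real CARD('d) * \<epsilon>"
        by (rule int_lattice_rounding) (rule that)
      have "n \<noteq> 0"
      proof (rule int_lattice_nonzero_if_near)
        show "\<bar>q $ j - n $ \<iota> j\<bar> < 1" for j
          using n[of "\<iota> j"] coord[of q j] \<epsilon>(2) K(2) by simp
      qed (use q in auto)
      have "norm (w q) + 1 \<le> (Bw + 1) * norm q" using Bw(2)[of q] nq by (simp add: algebra_simps)
      then have "(norm (w q) + 1) ^ e \<le> ((Bw + 1) * norm q) ^ e" by (rule power_mono) simp
      also have "\<dots> \<le> ((Bw + 1) * norm q) ^ CARD('c)"
        using Bw(1) nq e by (intro power_increasing one_le_mult_real) auto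
      finally have base: "(norm (w q) + 1) ^ e \<le> ((Bw + 1) * norm q) ^ CARD('c)" .
      have "K0 \<le> norm (n - w q) * (norm (w q) + 1) ^ e" using far[OF n_int \<open>n \<noteq> 0\<close>] .
      also have "\<dots> \<le> (real CARD('d) * \<epsilon>) * ((Bw + 1) * norm q) ^ CARD('c)"
        using near base \<epsilon>(1) by (intro mult_mono) auto
      also have "\<dots> = real CARD('d) * (Bw + 1) ^ CARD('c) * (\<epsilon> * norm q ^ CARD('c))"
        by (simp only: power_mult_distrib mult_ac)
      also have "\<dots> = D * K" by (simp only: \<epsilon>(3) D_def)
      also have "\<dots> = K0 / 2" using D1 by (simp add: K_def)
      finally show False using K0 by simp
    qed
  qed
qed

theorem theorem3p3:
  fixes F :: "real^'d^'d"
    and S C U :: "(real^'d) set"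
    and \<iota> :: "'c::finite \<Rightarrow> 'd"
    and P :: "real^'d \<Rightarrow> real^'c"
  assumes "SL_int F"
    and "partially_hyperbolic F S C U"
    and "C \<inter> int_lattice = {0}"
    and "inj (\<lambda>j. cproj S C U (axis (\<iota> j) 1))"
    and "independent (range (\<lambda>j. cproj S C U (axis (\<iota> j) 1)))"
    and "span (range (\<lambda>j. cproj S C U (axis (\<iota> j) 1))) = C"
    and "linear P"
    and "\<And>v. P v = P (cproj S C U v)"
    and "\<And>j. P (cproj S C U (axis (\<iota> j) 1)) = axis j 1"
  shows "\<exists>K>0. \<forall>q::real^'c. q \<in> int_lattice \<and> q \<noteq> 0 \<longrightarrow>
           (\<exists>i::'d. \<forall>p\<in>\<int>. \<bar>P (axis i 1) \<bullet> q - p\<bar> > K / norm q ^ CARD('c))"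
proof -
  interpret toral_partially_hyperbolic F S C U
    using assms(1-3) by unfold_locales (simp_all add: SL_int_def invertible_det_nz)
  define w where "w = (*v) (\<chi> i. P (axis i 1))"
  have lin: "linear w" by (simp add: w_def matrix_vector_mul_linear)
  have w: "w q $ i = P (axis i 1) \<bullet> q" for q i
    by (simp add: w_def matrix_vector_mult_def inner_vec_def)
  have coord: "w q $ \<iota> j = q $ j" for q j
    using assms(8,9) unfolding w by (simp add: cart_eq_inner_axis inner_commute)
  have mem: "w q \<in> dual_center" for q
  proof -
    have "w q = (\<chi> i. P (axis i 1) \<bullet> q)" by (simp add: vec_eq_iff w)
    then show ?thesis using coordinate_vector_in_dual_center[OF assms(7,8)] by simp
  qed
  obtain K0 where K0: "K0 > 0" "\<And>(y :: real^'d) n. y \<in> dual_center \<Longrightarrow> n \<in> int_lattice \<Longrightarrow> n \<noteq> 0 \<Longrightarrow>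
      K0 \<le> norm (n - y) * (norm y + 1) ^ dim dual_center"
    using dual_center_far_from_lattice by blast
  have "\<exists>K>0. \<forall>q. q \<in> int_lattice \<and> q \<noteq> 0 \<longrightarrow>
      (\<exists>i. \<forall>p\<in>\<int>. \<bar>w q $ i - p\<bar> > K / norm q ^ CARD('c))"
  proof (rule coordinates_badly_approximable[OF lin coord dim_dual_center_le[OF assms(6)] K0(1)])
    show "K0 \<le> norm (n - w q) * (norm (w q) + 1) ^ dim dual_center"
      if "n \<in> int_lattice" "n \<noteq> 0" for q n
      using K0(2)[OF mem that] .
  qed
  then show ?thesis by (simp add: w)
qed

end
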